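(* Let $(N,\langle\,,\rangle)$ be a symplectic $L$-vector space of dimension $2n$. Let $\bar J\subset\mathbf Z/2n\mathbf Z$ be non-empty and symmetric with inverse image $J\subset\mathbf Z$, let $k\in J$ with $k+1\notin J$, let $\bar I=\bar J\cup\{\overline{k+1},\overline{-(k+1)}\}$, and let $\ell$ be the smallest element of $J$ with $\ell>k$. Let $f:X^G_{\bar I}\to X^G_{\bar J}$ be the forgetful map and let $\mathbf M=(M_i)_{i\in J}\in X^G_{\bar J}$. Then the map $(M_i)_{i\in I}\mapsto M_{k+1}$ is a bijection from $f^{-1}(\mathbf M)$ onto the set of $O_L$-lattices $M$ in $N$ with $M_k\subset M\subset M_\ell$ and $\dim_{\mathbf F}M/M_k=1$.
   Context: $L$ is the completion of the maximal unramified extension of a finite extension $F$ of $\mathbf Q_p$, $\pi$ a uniformizer of $F$, $O_L$ the integers of $L$, $\mathbf F$ its residue field. For an $O_L$-lattice $\Lambda$, $\Lambda^\perp=\{x\in N:\langle x,\Lambda\rangle\subset O_L\}$. A subset of $\mathbf Z/2n\mathbf Z$ is symmetric if stable under $x\mapsto-x$; $\bar m$ denotes the class of $m\in\mathbf Z$. For non-empty $\bar I$ with inverse image $I$, a periodic lattice chain of type $\bar I$ is a family of $O_L$-lattices $(M_i)_{i\in I}$ with $M_i\subset M_{i'}$, $\mathrm{length}(M_{i'}/M_i)=i'-i$ for $i<i'$ in $I$, and $M_{i+2n}=\pi^{-1}M_i$; it is selfdual if there is $d\in\mathbf Z$ with $M_i^\perp=M_{-i+2nd}$ for all $i\in I$.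 $X^G_{\bar I}$ denotes the set of selfdual periodic lattice chains of type $\bar I$ in $N$. *)

theory Defs
  imports Main
begin

text \<open>Vectors of the 2n-dimensional L-vector space N are modelled as coordinate
functions nat => 'L vanishing outside {0..<2n}.\<close>

definition vecs :: "nat \<Rightarrow> (nat \<Rightarrow> 'L::field) set" where
  "vecs n = {x. \<forall>j\<ge>2*n. x j = 0}"

definition vadd :: "(nat \<Rightarrow> 'L::field) \<Rightarrow> (nat \<Rightarrow> 'L) \<Rightarrow> nat \<Rightarrow> 'L" where
  "vadd x y = (\<lambda>j. x j + y j)"

definition vsc :: "'L::field \<Rightarrow> (nat \<Rightarrow> 'L) \<Rightarrow> nat \<Rightarrow> 'L" where
  "vsc c x = (\<lambda>j. c * x j)"

definition lincomb :: "nat \<Rightarrow> (nat \<Rightarrow> 'L::field) \<Rightarrow> (nat \<Rightarrow> nat \<Rightarrow> 'L) \<Rightarrow> nat \<Rightarrow> 'L" where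
  "lincomb n a b = (\<lambda>j. \<Sum>i<2*n. a i * b i j)"

definition discrete_valued :: "('L::field \<Rightarrow> int) \<Rightarrow> 'L set \<Rightarrow> 'L \<Rightarrow> bool" where
  "discrete_valued v OL \<pi> \<longleftrightarrow>
     (\<forall>x y. x \<noteq> 0 \<longrightarrow> y \<noteq> 0 \<longrightarrow> v (x * y) = v x + v y) \<and>
     (\<forall>x y. x \<noteq> 0 \<longrightarrow> y \<noteq> 0 \<longrightarrow> x + y \<noteq> 0 \<longrightarrow> min (v x) (v y) \<le> v (x + y)) \<and>
     \<pi> \<noteq> 0 \<and> v \<pi> = 1 \<and>
     OL = {x. x = 0 \<or> 0 \<le> v x}"

definition symplectic :: "nat \<Rightarrow> ((nat \<Rightarrow> 'L::field) \<Rightarrow> (nat \<Rightarrow> 'L) \<Rightarrow> 'L) \<Rightarrow> bool" where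
  "symplectic n B \<longleftrightarrow>
     (\<forall>x\<in>vecs n. \<forall>y\<in>vecs n. \<forall>z\<in>vecs n. \<forall>c.
        B (vadd x y) z = B x z + B y z \<and> B z (vadd x y) = B z x + B z y \<and>
        B (vsc c x) z = c * B x z \<and> B z (vsc c x) = c * B z x) \<and>
     (\<forall>x\<in>vecs n. B x x = 0) \<and>
     (\<forall>x\<in>vecs n. (\<forall>y\<in>vecs n. B x y = 0) \<longrightarrow> x = (\<lambda>_. 0))"

definition lattice :: "nat \<Rightarrow> 'L::field set \<Rightarrow> (nat \<Rightarrow> 'L) set \<Rightarrow> bool" where
  "lattice n OL M \<longleftrightarrow>
     (\<exists>b. (\<forall>i<2*n. b i \<in> vecs n) \<and>
          (\<forall>c. lincomb n c b = (\<lambda>_. 0) \<longrightarrow> (\<forall>i<2*n. c i = 0)) \<and>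
          (\<forall>x\<in>vecs n. \<exists>c. x = lincomb n c b) \<and>
          M = {lincomb n a b | a. \<forall>i. a i \<in> OL})"

definition omodule :: "'L::field set \<Rightarrow> (nat \<Rightarrow> 'L) set \<Rightarrow> bool" where
  "omodule OL C \<longleftrightarrow> (\<lambda>_. 0) \<in> C \<and> (\<forall>x\<in>C. \<forall>y\<in>C. vadd x y \<in> C) \<and>
                     (\<forall>a\<in>OL. \<forall>x\<in>C. vsc a x \<in> C)"

text \<open>Length of the OL-module B/A (for A \<subseteq> B): the maximal length of a strictly
increasing chain of OL-submodules from A to B.\<close>

definition olength :: "'L::field set \<Rightarrow> (nat \<Rightarrow> 'L) set \<Rightarrow> (nat \<Rightarrow> 'L) set \<Rightarrow> nat" where
  "olength OL A B = (GREATEST m. \<exists>C. C 0 = A \<and> C m = B \<and>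
        (\<forall>j<m. C j \<subset> C (Suc j)) \<and> (\<forall>j\<le>m. omodule OL (C j)))"

definition dual_lattice ::
  "nat \<Rightarrow> 'L::field set \<Rightarrow> ((nat \<Rightarrow> 'L) \<Rightarrow> (nat \<Rightarrow> 'L) \<Rightarrow> 'L) \<Rightarrow> (nat \<Rightarrow> 'L) set \<Rightarrow> (nat \<Rightarrow> 'L) set" where
  "dual_lattice n OL B \<Lambda> = {x \<in> vecs n. \<forall>y\<in>\<Lambda>. B x y \<in> OL}"

text \<open>Subsets of Z/2nZ are represented by sets of residues in {0..<2n};
the inverse image in Z.\<close>

definition invimg :: "nat \<Rightarrow> int set \<Rightarrow> int set" where
  "invimg n Ibar = {i. i mod (2 * int n) \<in> Ibar}"

definition symmetric_type :: "nat \<Rightarrow> int set \<Rightarrow> bool" where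
  "symmetric_type n Ibar \<longleftrightarrow> Ibar \<subseteq> {0..<2 * int n} \<and> (\<forall>x\<in>Ibar. (- x) mod (2 * int n) \<in> Ibar)"

text \<open>Selfdual periodic lattice chains of type Ibar, as families indexed by I
(extended by the empty set outside I).\<close>

definition XG ::
  "nat \<Rightarrow> 'L::field set \<Rightarrow> 'L \<Rightarrow> ((nat \<Rightarrow> 'L) \<Rightarrow> (nat \<Rightarrow> 'L) \<Rightarrow> 'L) \<Rightarrow> int set
    \<Rightarrow> (int \<Rightarrow> (nat \<Rightarrow> 'L) set) set" where
  "XG n OL \<pi> B Ibar = {M. let I = invimg n Ibar in
      (\<forall>i. i \<notin> I \<longrightarrow> M i = {}) \<and>
      (\<forall>i\<in>I. lattice n OL (M i)) \<and>
      (\<forall>i\<in>I. \<forall>i'\<in>I. i < i' \<longrightarrow> M i \<subseteq> M i' \<and> olength OL (M i) (M i') = nat (i' - i)) \<and>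
      (\<forall>i\<in>I. M (i + 2 * int n) = vsc (inverse \<pi>) ` M i) \<and>
      (\<exists>d::int. \<forall>i\<in>I. dual_lattice n OL B (M i) = M (- i + 2 * int n * d))}"

definition restrict_chain :: "int set \<Rightarrow> (int \<Rightarrow> 'a set) \<Rightarrow> int \<Rightarrow> 'a set" where
  "restrict_chain J M = (\<lambda>i. if i \<in> J then M i else {})"

end

theory Submission
  imports Defs "Jordan_Normal_Form.Determinant"
begin

text \<open>
  A chain N in the fibre over M is determined by its member N(k+1): periodicity gives
  N(k+1+2nt) = pi^(-t) N(k+1), selfduality gives the members at the indices -(k+1)+2n(d+t)
  as rescaled duals of N(k+1), and the duality index d is forced to be that of M because
  distinct shifts of a lattice M(i) are distinct.
  Conversely, a lattice L with M(k) \<subset> L \<subseteq> M(l) of colength one is placed at k+1, its dual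
  at -(k+1)+2nd, and both are propagated periodically. Since length is additive, the chain
  conditions only have to be checked against the two neighbours in J of each new index;
  dualising reverses inclusions and preserves colength one. The only new relation arises
  when both kinds of new indices lie in the same gap of J; it is pi^(-s) L \<subseteq> L^perp, which
  follows from M(k)^perp = pi^(-s) M(l) and \<langle>x0, x0\<rangle> = 0 for a generator x0 of L/M(k).
  Lengths are finite because strict chains of modules between two lattices have bounded
  length: relative to a basis of the smaller lattice, a module is determined by its pivots.
\<close>

(* Jordan_Normal_Form loads HOL-Algebra, whose lattice would otherwise shadow Defs.lattice. *)
hide_const (open) Lattice.lattice

lemma injective_matrix_left_inverse:
  fixes g :: "nat \<Rightarrow> nat \<Rightarrow> 'a::field"
  assumes inj: "\<And>c. (\<forall>j<m. (\<Sum>i<m. c i * g i j) = 0) \<Longrightarrow> (\<forall>i<m. c i = 0)"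
  shows "\<exists>h. \<forall>r<m. \<forall>j<m. (\<Sum>i<m. h r i * g i j) = (if r = j then 1 else 0)"
proof -
  define G where "G = mat m m (\<lambda>(j,i). g i j)"
  have G: "G \<in> carrier_mat m m" unfolding G_def by simp
  have "det G \<noteq> 0"
  proof
    assume "det G = 0"
    then obtain w where w: "w \<in> carrier_vec m" "w \<noteq> 0\<^sub>v m" "G *\<^sub>v w = 0\<^sub>v m"
      using det_0_iff_vec_prod_zero_field[OF G] by blast
    have "\<forall>j<m. (\<Sum>i<m. w $ i * g i j) = 0"
    proof (intro allI impI)
      fix j assume j: "j < m"
      have "(G *\<^sub>v w) $ j = (\<Sum>i<m. g i j * w $ i)"
        using j w(1) unfolding G_def
        by (simp add: mult_mat_vec_def scalar_prod_def lessThan_atLeast0)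
      then show "(\<Sum>i<m. w $ i * g i j) = 0" using w(3) j by (simp add: mult.commute)
    qed
    then have "w = 0\<^sub>v m" using inj w(1) by (intro eq_vecI) auto
    with w(2) show False by simp
  qed
  from det_non_zero_imp_unit[OF G this, of "()"]
  obtain K where K: "K \<in> carrier_mat m m" "G * K = 1\<^sub>m m"
    unfolding Units_def ring_mat_def by auto
  show ?thesis
  proof (intro exI allI impI)
    fix r j assume r: "r < m" and j: "j < m"
    have "(G * K) $$ (j, r) = (if r = j then 1 else 0)" using K(2) r j by simp
    moreover have "(G * K) $$ (j, r) = (\<Sum>i<m. K $$ (i, r) * g i j)"
      using K(1) r j unfolding G_def
      by (simp add: times_mat_def scalar_prod_def lessThan_atLeast0 mult.commute)
    ultimately show "(\<Sum>i<m. K $$ (i, r) * g i j) = (if r = j then 1 else 0)" by simp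
  qed
qed

lemma int_Least_greater:
  fixes J :: "int set"
  assumes "x0 \<in> J" "k < x0"
  shows "(LEAST l. l \<in> J \<and> k < l) \<in> J" "k < (LEAST l. l \<in> J \<and> k < l)"
    "\<And>x. x \<in> J \<Longrightarrow> k < x \<Longrightarrow> (LEAST l. l \<in> J \<and> k < l) \<le> x"
proof -
  define m0 where "m0 = (LEAST m::nat. k + 1 + int m \<in> J)"
  have "k + 1 + int (nat (x0 - k - 1)) \<in> J" using assms by simp
  then have m0: "k + 1 + int m0 \<in> J" unfolding m0_def by (rule LeastI)
  have le: "k + 1 + int m0 \<le> y" if "y \<in> J" "k < y" for y
  proof -
    have "k + 1 + int (nat (y - k - 1)) \<in> J" using that by simp
    then have "m0 \<le> nat (y - k - 1)" unfolding m0_def by (rule Least_le)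
    then show ?thesis using that by linarith
  qed
  have "(LEAST l. l \<in> J \<and> k < l) = k + 1 + int m0"
    by (rule Least_equality) (use m0 le in auto)
  then show "(LEAST l. l \<in> J \<and> k < l) \<in> J" "k < (LEAST l. l \<in> J \<and> k < l)"
    "\<And>x. x \<in> J \<Longrightarrow> k < x \<Longrightarrow> (LEAST l. l \<in> J \<and> k < l) \<le> x"
    using m0 le by auto
qed

section \<open>Discrete valuations\<close>

locale discrete_valuation =
  fixes v :: "'L::field \<Rightarrow> int" and OL :: "'L set" and \<pi> :: 'L
  assumes discrete_valued: "discrete_valued v OL \<pi>"
begin

lemma v_mult: "x \<noteq> 0 \<Longrightarrow> y \<noteq> 0 \<Longrightarrow> v (x * y) = v x + v y"
  using discrete_valued unfolding discrete_valued_def by blast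

lemma v_add: "x \<noteq> 0 \<Longrightarrow> y \<noteq> 0 \<Longrightarrow> x + y \<noteq> 0 \<Longrightarrow> min (v x) (v y) \<le> v (x + y)"
  using discrete_valued unfolding discrete_valued_def by blast

lemma pi_nonzero: "\<pi> \<noteq> 0"
  using discrete_valued unfolding discrete_valued_def by blast

lemma v_pi: "v \<pi> = 1"
  using discrete_valued unfolding discrete_valued_def by blast

lemma OL_iff: "x \<in> OL \<longleftrightarrow> x = 0 \<or> 0 \<le> v x"
  using discrete_valued unfolding discrete_valued_def by blast

lemma v_one: "v 1 = 0"
  using v_mult[of 1 1] by simp

lemma v_uminus: "x \<noteq> 0 \<Longrightarrow> v (- x) = v x"
  using v_mult[of "-1" x] v_mult[of "-1" "-1"] v_one by simp

lemma v_inverse: "x \<noteq> 0 \<Longrightarrow> v (inverse x) = - v x"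
  using v_mult[of x "inverse x"] v_one by simp

lemma v_pi_power: "v (\<pi> ^ t) = int t"
  by (induction t) (auto simp: v_one v_mult pi_nonzero v_pi)

lemma OL_0 [simp]: "0 \<in> OL"
  by (simp add: OL_iff)

lemma OL_1 [simp]: "1 \<in> OL"
  by (simp add: OL_iff v_one)

lemma OL_pi [simp]: "\<pi> \<in> OL"
  by (simp add: OL_iff v_pi)

lemma OL_mult [simp]: "x \<in> OL \<Longrightarrow> y \<in> OL \<Longrightarrow> x * y \<in> OL"
  by (cases "x = 0 \<or> y = 0") (auto simp: OL_iff v_mult)

lemma OL_uminus [simp]: "x \<in> OL \<Longrightarrow> - x \<in> OL"
  by (cases "x = 0") (auto simp: OL_iff v_uminus)

lemma OL_add [simp]: "x \<in> OL \<Longrightarrow> y \<in> OL \<Longrightarrow> x + y \<in> OL"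
  using v_add[of x y] by (cases "x = 0 \<or> y = 0 \<or> x + y = 0") (auto simp: OL_iff)

lemma OL_pi_power [simp]: "\<pi> ^ t \<in> OL"
  by (induction t) auto

lemma OL_sum: "(\<And>i. i \<in> S \<Longrightarrow> f i \<in> OL) \<Longrightarrow> sum f S \<in> OL"
  by (induction S rule: infinite_finite_induct) auto

lemma OL_divide:
  assumes "\<pi> ^ Suc t * c \<in> OL" "\<pi> ^ t * c' \<notin> OL"
  shows "c / c' \<in> OL"
proof (cases "c = 0")
  case False
  have c': "c' \<noteq> 0" using assms(2) by auto
  have "v (\<pi> ^ t * c') < 0" using assms(2) by (auto simp: OL_iff)
  then have "int t + v c' < 0" using v_mult[of "\<pi> ^ t" c'] c' pi_nonzero v_pi_power by simp
  moreover have "0 \<le> int (Suc t) + v c"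
    using assms(1) False pi_nonzero v_mult[of "\<pi> ^ Suc t" c] v_pi_power[of "Suc t"]
    by (auto simp: OL_iff)
  moreover have "v (c / c') = v c - v c'"
    using v_mult[of c "inverse c'"] v_inverse[of c'] False c' by (simp add: divide_inverse)
  ultimately show ?thesis by (simp add: OL_iff)
qed simp

lemma eventually_pi_power_mult_in_OL: "\<forall>\<^sub>F N in sequentially. \<pi> ^ N * c \<in> OL"
proof -
  obtain N0 where N0: "\<pi> ^ N0 * c \<in> OL"
  proof (cases "c = 0")
    case False
    have "v (\<pi> ^ nat (- v c) * c) = int (nat (- v c)) + v c"
      using v_mult[of "\<pi> ^ nat (- v c)" c] False pi_nonzero v_pi_power by simp
    then show ?thesis using that[of "nat (- v c)"] by (simp add: OL_iff)
  qed (use that in simp)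
  have "\<pi> ^ N * c \<in> OL" if "N0 \<le> N" for N
  proof -
    have eq: "\<pi> ^ N * c = \<pi> ^ (N - N0) * (\<pi> ^ N0 * c)"
      using that by (simp add: power_add[symmetric] mult.assoc)
    show ?thesis unfolding eq by (rule OL_mult[OF OL_pi_power N0])
  qed
  then show ?thesis unfolding eventually_sequentially by blast
qed

end

section \<open>Coordinate vectors\<close>

abbreviation vzero :: "nat \<Rightarrow> 'a::zero" where
  "vzero \<equiv> \<lambda>_. 0"

lemma vecs_zero [simp]: "vzero \<in> vecs n"
  by (simp add: vecs_def)

lemma vecs_vadd [simp]: "x \<in> vecs n \<Longrightarrow> y \<in> vecs n \<Longrightarrow> vadd x y \<in> vecs n"
  by (simp add: vecs_def vadd_def)

lemma vecs_vsc [simp]: "x \<in> vecs n \<Longrightarrow> vsc c x \<in> vecs n"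
  by (simp add: vecs_def vsc_def)

lemma vecs_lincomb [simp]: "(\<And>i. i < 2*n \<Longrightarrow> b i \<in> vecs n) \<Longrightarrow> lincomb n a b \<in> vecs n"
  by (simp add: vecs_def lincomb_def)

lemma vecs_sum:
  "finite S \<Longrightarrow> (\<And>i. i \<in> S \<Longrightarrow> f i \<in> vecs n) \<Longrightarrow> (\<lambda>j. \<Sum>i\<in>S. f i j) \<in> vecs n"
  by (simp add: vecs_def)

lemma vsc_vsc [simp]: "vsc a (vsc b x) = vsc (a * b) x"
  by (simp add: vsc_def mult.assoc)

lemma vsc_one [simp]: "vsc 1 x = x"
  by (simp add: vsc_def)

lemma vsc_zero [simp]: "vsc 0 x = vzero"
  by (simp add: vsc_def)

lemma vsc_vzero [simp]: "vsc c vzero = vzero"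
  by (simp add: vsc_def)

lemma vadd_vzero [simp]: "vadd x vzero = x" "vadd vzero x = x"
  by (simp_all add: vadd_def)

lemma vsc_vadd: "vsc c (vadd x y) = vadd (vsc c x) (vsc c y)"
  by (simp add: vsc_def vadd_def algebra_simps)

lemma vsc_add: "vsc (a + b) x = vadd (vsc a x) (vsc b x)"
  by (simp add: vadd_def vsc_def algebra_simps)

lemma vadd_commute: "vadd x y = vadd y x"
  by (simp add: vadd_def add.commute)

lemma vadd_diff_cancel: "vadd (vadd x (vsc (- c) y)) (vsc c y) = x"
  by (simp add: vadd_def vsc_def)

lemma inj_vsc: "c \<noteq> 0 \<Longrightarrow> inj (vsc c)"
  by (auto simp: vsc_def fun_eq_iff intro!: injI)

lemma lincomb_add: "lincomb n (\<lambda>i. a i + c i) b = vadd (lincomb n a b) (lincomb n c b)"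
  by (simp add: lincomb_def vadd_def algebra_simps sum.distrib)

lemma lincomb_scale: "lincomb n (\<lambda>i. s * a i) b = vsc s (lincomb n a b)"
  by (simp add: lincomb_def vsc_def sum_distrib_left mult.assoc)

lemma lincomb_scale_vectors: "lincomb n a (\<lambda>i. vsc s (b i)) = vsc s (lincomb n a b)"
  by (simp add: lincomb_def vsc_def sum_distrib_left algebra_simps)

lemma lincomb_cong: "(\<And>i. i < 2*n \<Longrightarrow> a i = c i) \<Longrightarrow> lincomb n a b = lincomb n c b"
  by (simp add: lincomb_def)

lemma lincomb_zero [simp]: "lincomb n (\<lambda>_. 0) b = vzero"
  by (simp add: lincomb_def)

lemma lincomb_delta:
  assumes "r < 2*n"
  shows "lincomb n (\<lambda>i. if i = r then 1 else 0) b = b r"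
proof -
  have "(\<Sum>i<2*n. (if i = r then 1 else 0) * b i j) = (\<Sum>i<2*n. if i = r then b r j else 0)" for j
    by (rule sum.cong) auto
  then show ?thesis using assms by (simp add: lincomb_def fun_eq_iff)
qed

lemma lincomb_diff:
  "lincomb n (\<lambda>i. a i - c i) b = vadd (lincomb n a b) (vsc (-1) (lincomb n c b))"
  using lincomb_add[of n a "\<lambda>i. - c i" b] lincomb_scale[of n "-1" c b] by simp

lemma lincomb_as_sum: "lincomb n a b = (\<lambda>j. \<Sum>i<2*n. vsc (a i) (b i) j)"
  by (simp add: lincomb_def vsc_def)

section \<open>Modules and lattices\<close>

lemma omodule_vzero: "omodule OL D \<Longrightarrow> vzero \<in> D"
  unfolding omodule_def by blast

lemma omodule_vadd: "omodule OL D \<Longrightarrow> x \<in> D \<Longrightarrow> y \<in> D \<Longrightarrow> vadd x y \<in> D"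
  unfolding omodule_def by blast

lemma omodule_vsc: "omodule OL D \<Longrightarrow> a \<in> OL \<Longrightarrow> x \<in> D \<Longrightarrow> vsc a x \<in> D"
  unfolding omodule_def by blast

lemma omodule_Int: "omodule OL S \<Longrightarrow> omodule OL T \<Longrightarrow> omodule OL (S \<inter> T)"
  unfolding omodule_def by blast

lemma omodule_image_vsc:
  assumes D: "omodule OL D"
  shows "omodule OL (vsc c ` D)"
  unfolding omodule_def
proof (intro conjI ballI)
  show "vzero \<in> vsc c ` D"
    using imageI[OF omodule_vzero[OF D], of "vsc c"] by simp
next
  fix x y assume "x \<in> vsc c ` D" "y \<in> vsc c ` D"
  then obtain x' y' where xy: "x = vsc c x'" "y = vsc c y'" "x' \<in> D" "y' \<in> D" by blast
  show "vadd x y \<in> vsc c ` D"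
    using imageI[OF omodule_vadd[OF D xy(3,4)], of "vsc c"] xy(1,2) by (simp add: vsc_vadd)
next
  fix a x assume a: "a \<in> OL" and "x \<in> vsc c ` D"
  then obtain x' where x: "x = vsc c x'" "x' \<in> D" by blast
  show "vsc a x \<in> vsc c ` D"
    using imageI[OF omodule_vsc[OF D a x(2)], of "vsc c"] x(1) by (simp add: mult.commute)
qed

definition msum :: "(nat \<Rightarrow> 'a::field) set \<Rightarrow> (nat \<Rightarrow> 'a) set \<Rightarrow> (nat \<Rightarrow> 'a) set" where
  "msum S T = {vadd a b | a b. a \<in> S \<and> b \<in> T}"

lemma msum_commute: "msum S T = msum T S"
  unfolding msum_def by (metis vadd_commute)

lemma omodule_msum:
  assumes S: "omodule OL S" and T: "omodule OL T"
  shows "omodule OL (msum S T)"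
  unfolding omodule_def msum_def
proof (intro conjI ballI)
  show "vzero \<in> {vadd a b |a b. a \<in> S \<and> b \<in> T}"
    using omodule_vzero[OF S] omodule_vzero[OF T] by force
next
  fix x y assume "x \<in> {vadd a b |a b. a \<in> S \<and> b \<in> T}" "y \<in> {vadd a b |a b. a \<in> S \<and> b \<in> T}"
  then obtain a b a' b' where
    ab: "x = vadd a b" "a \<in> S" "b \<in> T" "y = vadd a' b'" "a' \<in> S" "b' \<in> T" by blast
  have "vadd x y = vadd (vadd a a') (vadd b b')"
    unfolding ab by (simp add: vadd_def algebra_simps)
  then show "vadd x y \<in> {vadd a b |a b. a \<in> S \<and> b \<in> T}"
    using ab omodule_vadd[OF S] omodule_vadd[OF T] by blast
next
  fix c x assume c: "c \<in> OL" and "x \<in> {vadd a b |a b. a \<in> S \<and> b \<in> T}"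
  then obtain a b where ab: "x = vadd a b" "a \<in> S" "b \<in> T" by blast
  have "vsc c x = vadd (vsc c a) (vsc c b)" unfolding ab by (simp add: vsc_vadd)
  then show "vsc c x \<in> {vadd a b |a b. a \<in> S \<and> b \<in> T}"
    using ab c omodule_vsc[OF S] omodule_vsc[OF T] by blast
qed

lemma msum_subset_left: "omodule OL T \<Longrightarrow> S \<subseteq> msum S T"
  unfolding msum_def by (force dest: omodule_vzero)

lemma msum_subset_right: "omodule OL S \<Longrightarrow> T \<subseteq> msum S T"
  unfolding msum_def by (force dest: omodule_vzero)

lemma msum_absorb:
  assumes "S \<subseteq> T" "omodule OL S" "omodule OL T"
  shows "msum S T = T"
  using assms msum_subset_right[of OL S T] omodule_vadd[of OL T] unfolding msum_def by blast

context discrete_valuation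
begin

lemma omodule_multiples: "omodule OL {vsc c x | c. c \<in> OL}"
  unfolding omodule_def
proof (intro conjI ballI)
  have "vzero = vsc 0 x" by simp
  then show "vzero \<in> {vsc c x |c. c \<in> OL}" using OL_0 by blast
next
  fix y z assume "y \<in> {vsc c x |c. c \<in> OL}" "z \<in> {vsc c x |c. c \<in> OL}"
  then obtain c c' where "y = vsc c x" "z = vsc c' x" "c \<in> OL" "c' \<in> OL" by blast
  then have "vadd y z = vsc (c + c') x" "c + c' \<in> OL" by (simp_all add: vsc_add)
  then show "vadd y z \<in> {vsc c x |c. c \<in> OL}" by blast
next
  fix a y assume "a \<in> OL" "y \<in> {vsc c x |c. c \<in> OL}"
  then obtain c where "y = vsc c x" "c \<in> OL" by blast
  then have "vsc a y = vsc (a * c) x" "a * c \<in> OL" using \<open>a \<in> OL\<close> by simp_all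
  then show "vsc a y \<in> {vsc c x |c. c \<in> OL}" by blast
qed

end

locale lattice_space = discrete_valuation v OL \<pi>
  for v :: "'L::field \<Rightarrow> int" and OL :: "'L set" and \<pi> :: 'L +
  fixes n :: nat
begin

definition basis :: "(nat \<Rightarrow> nat \<Rightarrow> 'L) \<Rightarrow> bool" where
  "basis b \<longleftrightarrow> (\<forall>i<2*n. b i \<in> vecs n) \<and> (\<forall>c. lincomb n c b = vzero \<longrightarrow> (\<forall>i<2*n. c i = 0)) \<and>
     (\<forall>x\<in>vecs n. \<exists>c. x = lincomb n c b)"

definition ospan :: "(nat \<Rightarrow> nat \<Rightarrow> 'L) \<Rightarrow> (nat \<Rightarrow> 'L) set" where
  "ospan b = {lincomb n a b | a. \<forall>i. a i \<in> OL}"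

definition coord :: "(nat \<Rightarrow> nat \<Rightarrow> 'L) \<Rightarrow> (nat \<Rightarrow> 'L) \<Rightarrow> nat \<Rightarrow> 'L" where
  "coord b x = (SOME c. x = lincomb n c b)"

lemma lattice_iff: "lattice n OL M \<longleftrightarrow> (\<exists>b. basis b \<and> M = ospan b)"
  unfolding Defs.lattice_def basis_def ospan_def by (simp only: conj_assoc)

lemma basis_vecs: "basis b \<Longrightarrow> i < 2*n \<Longrightarrow> b i \<in> vecs n"
  unfolding basis_def by blast

lemma basis_lincomb_eqD:
  assumes "basis b" "lincomb n c b = lincomb n c' b" "i < 2*n"
  shows "c i = c' i"
proof -
  have "lincomb n (\<lambda>i. c i - c' i) b = vzero"
    using assms(2) by (simp add: lincomb_diff vadd_def vsc_def)
  then show ?thesis using assms(1,3) unfolding basis_def by auto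
qed

lemma lincomb_coord: assumes "basis b" "x \<in> vecs n" shows "lincomb n (coord b x) b = x"
proof -
  obtain c where "x = lincomb n c b" using assms unfolding basis_def by blast
  then show ?thesis unfolding coord_def by (metis (mono_tags, lifting) someI_ex)
qed

lemma coord_lincomb: assumes "basis b" "i < 2*n" shows "coord b (lincomb n c b) i = c i"
  using lincomb_coord[OF assms(1), of "lincomb n c b"] basis_lincomb_eqD[OF assms(1) _ assms(2)]
    basis_vecs[OF assms(1)] by simp

lemma vecs_eq_if_coord_eq:
  assumes "basis b" "x \<in> vecs n" "y \<in> vecs n" "\<And>i. i < 2*n \<Longrightarrow> coord b x i = coord b y i"
  shows "x = y"
  using lincomb_coord[OF assms(1,2)] lincomb_coord[OF assms(1,3)]
    lincomb_cong[of n "coord b x" "coord b y" b] assms(4)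
  by metis

lemma coord_vadd:
  assumes "basis b" "x \<in> vecs n" "y \<in> vecs n" "i < 2*n"
  shows "coord b (vadd x y) i = coord b x i + coord b y i"
proof -
  have "vadd x y = lincomb n (\<lambda>i. coord b x i + coord b y i) b"
    using lincomb_coord[OF assms(1,2)] lincomb_coord[OF assms(1,3)] by (simp add: lincomb_add)
  then show ?thesis using coord_lincomb[OF assms(1,4)] by simp
qed

lemma coord_vsc:
  assumes "basis b" "x \<in> vecs n" "i < 2*n"
  shows "coord b (vsc c x) i = c * coord b x i"
proof -
  have "vsc c x = lincomb n (\<lambda>i. c * coord b x i) b"
    using lincomb_coord[OF assms(1,2)] by (simp add: lincomb_scale)
  then show ?thesis using coord_lincomb[OF assms(1,3)] by simp
qed

lemma coord_basis:
  assumes "basis b" "r < 2*n" "i < 2*n"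
  shows "coord b (b r) i = (if i = r then 1 else 0)"
  using coord_lincomb[OF assms(1,3), of "\<lambda>i. if i = r then 1 else 0"] lincomb_delta[OF assms(2), of b]
  by simp

lemma coord_vzero: assumes "basis b" "i < 2*n" shows "coord b vzero i = 0"
  using coord_lincomb[OF assms, of "\<lambda>_. 0"] by simp

lemma coord_sum:
  assumes b: "basis b" and "finite S" "\<And>r. r \<in> S \<Longrightarrow> g r \<in> vecs n" "i < 2*n"
  shows "coord b (\<lambda>j. \<Sum>r\<in>S. g r j) i = (\<Sum>r\<in>S. coord b (g r) i)"
  using assms(2-)
proof (induction S rule: finite_induct)
  case empty then show ?case using coord_vzero[OF b] by simp
next
  case (insert a S)
  have "(\<lambda>j. \<Sum>r\<in>insert a S. g r j) = vadd (g a) (\<lambda>j. \<Sum>r\<in>S. g r j)"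
    using insert by (simp add: vadd_def)
  then show ?case using insert by (simp add: coord_vadd[OF b] vecs_sum)
qed

lemma coord_lincomb_basis:
  assumes e: "basis e" and f: "basis f" and i: "i < 2*n"
  shows "coord e (lincomb n a f) i = (\<Sum>r<2*n. a r * coord e (f r) i)"
  unfolding lincomb_as_sum using basis_vecs[OF f] i
  by (subst coord_sum[OF e]) (auto simp: coord_vsc[OF e])

lemma ospan_iff:
  assumes "basis b"
  shows "x \<in> ospan b \<longleftrightarrow> x \<in> vecs n \<and> (\<forall>i<2*n. coord b x i \<in> OL)"
proof
  assume "x \<in> ospan b"
  then obtain a where a: "x = lincomb n a b" "\<forall>i. a i \<in> OL" unfolding ospan_def by blast
  then show "x \<in> vecs n \<and> (\<forall>i<2*n. coord b x i \<in> OL)"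
    using coord_lincomb[OF assms] basis_vecs[OF assms] by simp
next
  assume x: "x \<in> vecs n \<and> (\<forall>i<2*n. coord b x i \<in> OL)"
  define a where "a = (\<lambda>i. if i < 2*n then coord b x i else 0)"
  have "lincomb n a b = lincomb n (coord b x) b" by (rule lincomb_cong) (simp add: a_def)
  then have "x = lincomb n a b" using lincomb_coord[OF assms] x by simp
  moreover have "\<forall>i. a i \<in> OL" using x by (simp add: a_def)
  ultimately show "x \<in> ospan b" unfolding ospan_def by blast
qed

lemma basis_in_ospan: "basis b \<Longrightarrow> r < 2*n \<Longrightarrow> b r \<in> ospan b"
  by (simp add: ospan_iff basis_vecs coord_basis)

lemma omodule_ospan: assumes b: "basis b" shows "omodule OL (ospan b)"
  unfolding omodule_def
  using coord_vzero[OF b] coord_vadd[OF b] coord_vsc[OF b] by (auto simp: ospan_iff[OF b])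

lemma lattice_vecs: "lattice n OL M \<Longrightarrow> M \<subseteq> vecs n"
  unfolding lattice_iff using ospan_iff by blast

lemma lattice_omodule: "lattice n OL M \<Longrightarrow> omodule OL M"
  unfolding lattice_iff using omodule_ospan by blast

lemma basis_scale:
  assumes "basis b" "c \<noteq> 0"
  shows "basis (\<lambda>i. vsc c (b i))"
  unfolding basis_def
proof (intro conjI allI impI ballI)
  fix i assume "i < 2*n" then show "vsc c (b i) \<in> vecs n" using basis_vecs[OF assms(1)] by simp
next
  fix a i assume "lincomb n a (\<lambda>i. vsc c (b i)) = vzero" "i < 2*n"
  then have "vsc c (lincomb n a b) = vsc c vzero" by (simp add: lincomb_scale_vectors)
  then have "lincomb n a b = vzero" by (rule injD[OF inj_vsc[OF assms(2)]])
  then show "a i = 0" using assms(1) \<open>i < 2*n\<close> unfolding basis_def by blast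
next
  fix x :: "nat \<Rightarrow> 'L" assume "x \<in> vecs n"
  then obtain a where a: "vsc (inverse c) x = lincomb n a b"
    using assms(1) vecs_vsc unfolding basis_def by blast
  then have "x = vsc c (lincomb n a b)" using assms(2) by (metis vsc_vsc right_inverse vsc_one)
  then show "\<exists>a. x = lincomb n a (\<lambda>i. vsc c (b i))" by (auto simp: lincomb_scale_vectors)
qed

lemma lattice_image_vsc:
  assumes "lattice n OL M" "c \<noteq> 0"
  shows "lattice n OL (vsc c ` M)"
proof -
  obtain b where b: "basis b" "M = ospan b" using assms(1) unfolding lattice_iff by blast
  have "vsc c ` ospan b = ospan (\<lambda>i. vsc c (b i))"
    unfolding ospan_def by (auto simp: lincomb_scale_vectors)
  then show ?thesis using basis_scale[OF b(1) assms(2)] b(2) unfolding lattice_iff by auto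
qed

section \<open>Lengths of modules between lattices\<close>

definition module_chain :: "(nat \<Rightarrow> (nat \<Rightarrow> 'L) set) \<Rightarrow> nat \<Rightarrow> bool" where
  "module_chain C m \<longleftrightarrow> (\<forall>j<m. C j \<subset> C (Suc j)) \<and> (\<forall>j\<le>m. omodule OL (C j))"

lemma olength_module_chain:
  "olength OL X Y = (GREATEST m. \<exists>C. C 0 = X \<and> C m = Y \<and> module_chain C m)"
  unfolding olength_def module_chain_def by simp

lemma module_chain_mono:
  assumes "module_chain C m" "i \<le> j" "j \<le> m"
  shows "C i \<subseteq> C j"
  using assms(2,3)
proof (induction j)
  case (Suc j)
  show ?case
  proof (cases "i = Suc j")
    case False
    then have "C i \<subseteq> C j" using Suc by simp
    moreover have "C j \<subset> C (Suc j)" using assms(1) Suc.prems unfolding module_chain_def by simp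
    ultimately show ?thesis by blast
  qed simp
qed simp

lemma module_chain_strict:
  assumes "module_chain C m" "i < j" "j \<le> m"
  shows "C i \<subset> C j"
proof -
  obtain j' where j: "j = Suc j'" using assms(2) by (cases j) auto
  have "C i \<subseteq> C j'" using module_chain_mono[OF assms(1), of i j'] assms j by simp
  moreover have "C j' \<subset> C (Suc j')" using assms(1,3) j unfolding module_chain_def by simp
  ultimately show ?thesis using j by blast
qed

lemma module_chain_two:
  assumes "X \<subset> Y" "omodule OL X" "omodule OL Y"
  shows "module_chain (\<lambda>j. if j = 0 then X else Y) 1"
  using assms unfolding module_chain_def by (auto simp: le_Suc_eq)

lemma module_chain_image_vsc:
  assumes "module_chain C m" "c \<noteq> 0"
  shows "module_chain (\<lambda>j. vsc c ` C j) m"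
proof -
  have "vsc c ` P \<subset> vsc c ` Q" if "P \<subset> Q" for P Q
    using that inj_vsc[OF assms(2)] by (metis image_mono inj_image_eq_iff psubset_eq)
  then show ?thesis using assms(1) unfolding module_chain_def by (auto intro: omodule_image_vsc)
qed

definition scaled_ospan :: "(nat \<Rightarrow> nat \<Rightarrow> 'L) \<Rightarrow> nat \<Rightarrow> (nat \<Rightarrow> 'L) set" where
  "scaled_ospan e N = {x \<in> vecs n. \<forall>i<2*n. \<pi> ^ N * coord e x i \<in> OL}"

lemma lattice_subset_scaled_ospan:
  assumes e: "basis e" and C: "lattice n OL C"
  obtains N where "C \<subseteq> scaled_ospan e N"
proof -
  obtain f where f: "basis f" "C = ospan f" using C lattice_iff by blast
  have "\<forall>\<^sub>F N in sequentially. \<forall>s\<in>{..<2*n} \<times> {..<2*n}. \<pi> ^ N * coord e (f (fst s)) (snd s) \<in> OL"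
    by (intro eventually_ball_finite ballI eventually_pi_power_mult_in_OL) simp
  then obtain N where N: "\<And>r i. r < 2*n \<Longrightarrow> i < 2*n \<Longrightarrow> \<pi> ^ N * coord e (f r) i \<in> OL"
    unfolding eventually_sequentially by auto
  have "C \<subseteq> scaled_ospan e N"
  proof
    fix x assume "x \<in> C"
    then obtain a where a: "x = lincomb n a f" "\<forall>i. a i \<in> OL" using f unfolding ospan_def by blast
    have "\<pi> ^ N * coord e x i \<in> OL" if i: "i < 2*n" for i
    proof -
      have "\<pi> ^ N * coord e x i = (\<Sum>r<2*n. a r * (\<pi> ^ N * coord e (f r) i))"
        unfolding a using coord_lincomb_basis[OF e f(1) i]
        by (simp add: sum_distrib_left algebra_simps)
      also have "\<dots> \<in> OL" using a N i by (intro OL_sum) auto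
      finally show ?thesis .
    qed
    moreover have "x \<in> vecs n" using a basis_vecs[OF f(1)] by simp
    ultimately show "x \<in> scaled_ospan e N" unfolding scaled_ospan_def by blast
  qed
  then show thesis by (rule that)
qed

lemma vsc_pi_power_scaled_ospan:
  assumes e: "basis e" and x: "x \<in> scaled_ospan e N"
  shows "vsc (\<pi> ^ N) x \<in> ospan e"
  using x unfolding scaled_ospan_def by (auto simp: ospan_iff[OF e] coord_vsc[OF e])

text \<open>Between ospan e and scaled_ospan e N a module is determined by its pivots, of which
  there are at most 2nN; this bounds the length of strict module chains.\<close>

definition pivots :: "(nat \<Rightarrow> nat \<Rightarrow> 'L) \<Rightarrow> nat \<Rightarrow> (nat \<Rightarrow> 'L) set \<Rightarrow> (nat \<times> nat) set" where
  "pivots e N D = {p \<in> {..<2*n} \<times> {..<N}. \<exists>x\<in>D.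
     (\<forall>s. fst p < s \<and> s < 2*n \<longrightarrow> coord e x s = 0) \<and> \<pi> ^ snd p * coord e x (fst p) \<notin> OL}"

lemma pivots_mono: "D \<subseteq> D' \<Longrightarrow> pivots e N D \<subseteq> pivots e N D'"
  unfolding pivots_def by blast

lemma finite_pivots: "finite (pivots e N D)"
  unfolding pivots_def by (rule finite_subset[of _ "{..<2*n} \<times> {..<N}"]) auto

lemma card_pivots_le: "card (pivots e N D) \<le> 2*n*N"
proof -
  have "card (pivots e N D) \<le> card ({..<2*n} \<times> {..<N})"
    unfolding pivots_def by (rule card_mono) auto
  then show ?thesis by (simp add: card_cartesian_product)
qed

lemma pivot_elimination:
  assumes e: "basis e" and D: "omodule OL D" and sub: "D \<subseteq> D'" and lo: "ospan e \<subseteq> D"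
    and hi: "D' \<subseteq> scaled_ospan e N" and P: "pivots e N D' \<subseteq> pivots e N D"
    and r: "r < 2*n" and x: "x \<in> D'" and xz: "\<forall>s. r < s \<and> s < 2*n \<longrightarrow> coord e x s = 0"
  obtains y where "y \<in> D" "\<forall>s. r < s \<and> s < 2*n \<longrightarrow> coord e y s = 0" "coord e y r = coord e x r"
proof (cases "coord e x r \<in> OL")
  case True
  have "vsc (coord e x r) (e r) \<in> D"
    using True lo basis_in_ospan[OF e r] by (blast intro: omodule_vsc[OF D])
  then show thesis
    using that r basis_vecs[OF e r] by (auto simp: coord_vsc[OF e] coord_basis[OF e])
next
  case False
  define c where "c = coord e x r"
  have "\<pi> ^ N * c \<in> OL" using x hi r unfolding scaled_ospan_def c_def by blast
  then have N0: "N \<noteq> 0" and ex: "\<pi> ^ Suc (N - 1) * c \<in> OL"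
    using False unfolding c_def by (cases N; auto)+
  define t where "t = (LEAST t. \<pi> ^ Suc t * c \<in> OL)"
  have t1: "\<pi> ^ Suc t * c \<in> OL" unfolding t_def using ex by (rule LeastI)
  have "t \<le> N - 1" unfolding t_def using ex by (rule Least_le)
  have t2: "\<pi> ^ t * c \<notin> OL"
  proof (cases t)
    case (Suc t')
    then have "\<pi> ^ Suc t' * c \<notin> OL" unfolding t_def by (metis lessI not_less_Least)
    then show ?thesis using Suc by simp
  qed (use False c_def in simp)
  have "(r, t) \<in> pivots e N D'"
    using x xz t2 r \<open>t \<le> N - 1\<close> N0 unfolding pivots_def c_def by auto
  then have "(r, t) \<in> pivots e N D" using P by blast
  then obtain y where y: "y \<in> D" "\<forall>s. r < s \<and> s < 2*n \<longrightarrow> coord e y s = 0"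
    "\<pi> ^ t * coord e y r \<notin> OL"
    unfolding pivots_def by auto
  have yv: "y \<in> vecs n" using y(1) sub hi unfolding scaled_ospan_def by blast
  define lam where "lam = c / coord e y r"
  have "lam \<in> OL" unfolding lam_def by (rule OL_divide[OF t1 y(3)])
  then have "vsc lam y \<in> D" using y(1) D by (rule omodule_vsc[rotated])
  moreover have "coord e y r \<noteq> 0" using y(3) by auto
  ultimately show thesis
    using that y(2) r yv unfolding lam_def c_def by (auto simp: coord_vsc[OF e])
qed

lemma subset_if_pivots_subset:
  assumes e: "basis e" and D: "omodule OL D" and D': "omodule OL D'"
    and sub: "D \<subseteq> D'" and lo: "ospan e \<subseteq> D" and hi: "D' \<subseteq> scaled_ospan e N"
    and P: "pivots e N D' \<subseteq> pivots e N D"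
  shows "D' \<subseteq> D"
proof -
  have "x \<in> D" if "r \<le> 2*n" "x \<in> D'" "\<forall>s. r \<le> s \<and> s < 2*n \<longrightarrow> coord e x s = 0" for r x
    using that
  proof (induction r arbitrary: x)
    case 0
    have "x \<in> vecs n" using 0 hi unfolding scaled_ospan_def by blast
    then have "x = vzero"
      by (rule vecs_eq_if_coord_eq[OF e _ vecs_zero]) (use 0 coord_vzero[OF e] in auto)
    then show ?case using omodule_vzero[OF D] by simp
  next
    case (Suc r)
    then have r: "r < 2*n" by simp
    obtain y where y: "y \<in> D" "\<forall>s. r < s \<and> s < 2*n \<longrightarrow> coord e y s = 0" "coord e y r = coord e x r"
      using pivot_elimination[OF e D sub lo hi P r Suc.prems(2)] Suc.prems(3) by (auto simp: Suc_le_eq)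
    have xv: "x \<in> vecs n" and yv: "y \<in> vecs n"
      using Suc.prems(2) y(1) sub hi unfolding scaled_ospan_def by blast+
    define z where "z = vadd x (vsc (-1) y)"
    have "y \<in> D'" using y(1) sub by blast
    then have "z \<in> D'"
      unfolding z_def using Suc.prems(2) omodule_vadd[OF D'] omodule_vsc[OF D'] by simp
    moreover have "coord e z s = 0" if "r \<le> s" "s < 2*n" for s
      using Suc.prems(3) y(2,3) xv yv that
      by (cases "s = r") (auto simp: z_def coord_vadd[OF e] coord_vsc[OF e] Suc_le_eq)
    ultimately have "z \<in> D" using Suc.IH r by simp
    moreover have "x = vadd z y" unfolding z_def by (simp add: vadd_def vsc_def)
    ultimately show ?case using y(1) omodule_vadd[OF D] by simp
  qed
  then show ?thesis by fastforce
qed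

lemma module_chain_length_le:
  assumes e: "basis e" and ch: "module_chain C m"
    and lo: "ospan e \<subseteq> C 0" and hi: "C m \<subseteq> scaled_ospan e N"
  shows "m \<le> 2*n*N"
proof -
  have "j \<le> card (pivots e N (C j))" if "j \<le> m" for j
    using that
  proof (induction j)
    case (Suc j)
    have sub: "C j \<subset> C (Suc j)" using ch Suc.prems unfolding module_chain_def by simp
    have om: "omodule OL (C j)" "omodule OL (C (Suc j))"
      using ch Suc.prems unfolding module_chain_def by auto
    have lo': "ospan e \<subseteq> C j" using lo module_chain_mono[OF ch, of 0 j] Suc.prems by auto
    have hi': "C (Suc j) \<subseteq> scaled_ospan e N"
      using hi module_chain_mono[OF ch, of "Suc j" m] Suc.prems by auto
    have "pivots e N (C j) \<subset> pivots e N (C (Suc j))"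
      using pivots_mono[of "C j" "C (Suc j)"] subset_if_pivots_subset[OF e om _ lo' hi'] sub by blast
    then have "card (pivots e N (C j)) < card (pivots e N (C (Suc j)))"
      using finite_pivots by (rule psubset_card_mono[rotated])
    then show ?case using Suc by simp
  qed simp
  then show ?thesis using card_pivots_le[of e N "C m"] by fastforce
qed

lemma module_chain_between_lattices_bounded:
  assumes L1: "lattice n OL L1" and L2: "lattice n OL L2"
  obtains K where "\<And>C m. module_chain C m \<Longrightarrow> L1 \<subseteq> C 0 \<Longrightarrow> C m \<subseteq> L2 \<Longrightarrow> m \<le> K"
proof -
  obtain e where e: "basis e" "L1 = ospan e" using L1 lattice_iff by blast
  obtain N where N: "L2 \<subseteq> scaled_ospan e N" using lattice_subset_scaled_ospan[OF e(1) L2] .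
  show thesis using that module_chain_length_le[OF e(1)] e(2) N by blast
qed

lemma olength_ge:
  assumes X: "lattice n OL X" and Y: "lattice n OL Y"
    and C: "module_chain C m" "C 0 = X" "C m = Y"
  shows "m \<le> olength OL X Y"
proof -
  obtain K where K: "\<And>C m. module_chain C m \<Longrightarrow> X \<subseteq> C 0 \<Longrightarrow> C m \<subseteq> Y \<Longrightarrow> m \<le> K"
    using module_chain_between_lattices_bounded[OF X Y] by blast
  show ?thesis unfolding olength_module_chain
    by (rule Greatest_le_nat[where b = K]) (use C K in auto)
qed

lemma olength_module_chain_exists:
  assumes X: "lattice n OL X" and Y: "lattice n OL Y" and XY: "X \<subseteq> Y"
  obtains C where "C 0 = X" "C (olength OL X Y) = Y" "module_chain C (olength OL X Y)"
proof -
  obtain K where K: "\<And>C m. module_chain C m \<Longrightarrow> X \<subseteq> C 0 \<Longrightarrow> C m \<subseteq> Y \<Longrightarrow> m \<le> K"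
    using module_chain_between_lattices_bounded[OF X Y] by blast
  have "\<exists>m C. C 0 = X \<and> C m = Y \<and> module_chain C m"
  proof (cases "X = Y")
    case True
    then show ?thesis using lattice_omodule[OF X] unfolding module_chain_def
      by (intro exI[of _ 0] exI[of _ "\<lambda>_. X"]) auto
  next
    case False
    then show ?thesis using module_chain_two[of X Y] XY lattice_omodule[OF X] lattice_omodule[OF Y]
      by (intro exI[of _ 1] exI[of _ "\<lambda>j. if j = 0 then X else Y"]) auto
  qed
  then obtain m0 where "\<exists>C. C 0 = X \<and> C m0 = Y \<and> module_chain C m0" by blast
  then have "\<exists>C. C 0 = X \<and> C (olength OL X Y) = Y \<and> module_chain C (olength OL X Y)"
    unfolding olength_module_chain by (rule GreatestI_nat[where b = K]) (use K in auto)
  then show thesis using that by blast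
qed

lemma olength_refl:
  assumes "omodule OL X"
  shows "olength OL X X = 0"
  unfolding olength_module_chain
proof (rule Greatest_equality)
  show "\<exists>C. C 0 = X \<and> C 0 = X \<and> module_chain C 0" using assms unfolding module_chain_def by auto
next
  fix m assume "\<exists>C. C 0 = X \<and> C m = X \<and> module_chain C m"
  then obtain C where C: "C 0 = X" "C m = X" "module_chain C m" by blast
  show "m \<le> 0"
  proof (rule ccontr)
    assume "\<not> m \<le> 0"
    then have "C 0 \<subset> C m" using module_chain_strict[OF C(3), of 0 m] by simp
    then show False using C by simp
  qed
qed

lemma olength_eq_1I:
  assumes "X \<subset> Y" "omodule OL X" "omodule OL Y"
    and between: "\<And>D. omodule OL D \<Longrightarrow> X \<subseteq> D \<Longrightarrow> D \<subseteq> Y \<Longrightarrow> D = X \<or> D = Y"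
  shows "olength OL X Y = 1"
  unfolding olength_module_chain
proof (rule Greatest_equality)
  show "\<exists>C. C 0 = X \<and> C 1 = Y \<and> module_chain C 1"
    using module_chain_two[OF assms(1-3)] by (intro exI[of _ "\<lambda>j. if j = 0 then X else Y"]) simp
next
  fix m assume "\<exists>C. C 0 = X \<and> C m = Y \<and> module_chain C m"
  then obtain C where C: "C 0 = X" "C m = Y" "module_chain C m" by blast
  show "m \<le> 1"
  proof (rule ccontr)
    assume "\<not> m \<le> 1"
    then have "C 0 \<subset> C 1" "C 1 \<subset> C m" "omodule OL (C 1)"
      using module_chain_strict[OF C(3)] C(3) unfolding module_chain_def by auto
    then show False using between[of "C 1"] C by auto
  qed
qed

lemma olength_eq_0_imp_eq:
  assumes X: "lattice n OL X" and Y: "lattice n OL Y" and "X \<subseteq> Y" "olength OL X Y = 0"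
  shows "X = Y"
proof (rule ccontr)
  assume "X \<noteq> Y"
  then have "module_chain (\<lambda>j. if j = 0 then X else Y) 1"
    using assms(3) lattice_omodule[OF X] lattice_omodule[OF Y] by (intro module_chain_two) auto
  then have "1 \<le> olength OL X Y" using olength_ge[OF X Y] by fastforce
  then show False using assms(4) by simp
qed

lemma olength_eq_1_between:
  assumes X: "lattice n OL X" and Y: "lattice n OL Y" and D: "omodule OL D"
    and "X \<subseteq> D" "D \<subseteq> Y" "olength OL X Y = 1"
  shows "D = X \<or> D = Y"
proof (rule ccontr)
  assume ne: "\<not> (D = X \<or> D = Y)"
  define C where "C = (\<lambda>j::nat. if j = 0 then X else if j = 1 then D else Y)"
  have "module_chain C 2"
    using assms ne lattice_omodule[OF X] lattice_omodule[OF Y]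
    unfolding module_chain_def C_def by (auto simp: less_Suc_eq le_Suc_eq)
  moreover have "C 0 = X" "C 2 = Y" unfolding C_def by simp_all
  ultimately have "2 \<le> olength OL X Y" using olength_ge[OF X Y] by blast
  then show False using assms by simp
qed

lemma module_chain_of_weak_chain:
  assumes "\<forall>j<m. D j \<subseteq> D (Suc j)" "\<forall>j\<le>m. omodule OL (D j)"
  shows "\<exists>C. C 0 = D 0 \<and> C (card {j. j < m \<and> D j \<noteq> D (Suc j)}) = D m \<and>
     module_chain C (card {j. j < m \<and> D j \<noteq> D (Suc j)})"
  using assms
proof (induction m)
  case 0
  then have "module_chain D 0" unfolding module_chain_def by simp
  then show ?case by (intro exI[of _ D]) simp
next
  case (Suc m)
  define s where "s = card {j. j < m \<and> D j \<noteq> D (Suc j)}"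
  obtain C where C: "C 0 = D 0" "C s = D m" "module_chain C s" using Suc unfolding s_def by auto
  show ?case
  proof (cases "D m = D (Suc m)")
    case True
    then have "{j. j < Suc m \<and> D j \<noteq> D (Suc j)} = {j. j < m \<and> D j \<noteq> D (Suc j)}"
      using less_Suc_eq by auto
    then show ?thesis using C True unfolding s_def by (intro exI[of _ C]) simp
  next
    case False
    then have "{j. j < Suc m \<and> D j \<noteq> D (Suc j)} = insert m {j. j < m \<and> D j \<noteq> D (Suc j)}"
      using less_Suc_eq by auto
    then have card: "card {j. j < Suc m \<and> D j \<noteq> D (Suc j)} = Suc s"
      unfolding s_def by simp
    define C' where "C' = (\<lambda>j. if j \<le> s then C j else D (Suc m))"
    have "module_chain C' (Suc s)"
      unfolding module_chain_def
    proof (intro conjI allI impI)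
      fix j assume j: "j < Suc s"
      show "C' j \<subset> C' (Suc j)"
      proof (cases "j < s")
        case True then show ?thesis using C(3) unfolding module_chain_def C'_def by auto
      next
        case False
        then have "j = s" using j by simp
        then show ?thesis using C(2) Suc.prems(1) \<open>D m \<noteq> D (Suc m)\<close> unfolding C'_def by auto
      qed
    next
      fix j assume "j \<le> Suc s"
      then show "omodule OL (C' j)"
        using C(3) Suc.prems(2) unfolding module_chain_def C'_def by auto
    qed
    moreover have "C' 0 = D 0" "C' (Suc s) = D (Suc m)" using C unfolding C'_def by auto
    ultimately show ?thesis using card by (intro exI[of _ C']) simp
  qed
qed

lemma card_strict_steps_le_olength:
  assumes X: "lattice n OL X" and Y: "lattice n OL Y"
    and D: "\<forall>j<m. D j \<subseteq> D (Suc j)" "\<forall>j\<le>m. omodule OL (D j)" "D 0 = X" "D m = Y"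
  shows "card {j. j < m \<and> D j \<noteq> D (Suc j)} \<le> olength OL X Y"
proof -
  obtain C where "C 0 = D 0" "C (card {j. j < m \<and> D j \<noteq> D (Suc j)}) = D m"
      "module_chain C (card {j. j < m \<and> D j \<noteq> D (Suc j)})"
    using module_chain_of_weak_chain[OF D(1,2)] by blast
  then show ?thesis using olength_ge[OF X Y] D(3,4) by simp
qed

lemma strict_subset_Int_or_msum:
  assumes "E \<subset> E'" "omodule OL E" "omodule OL E'" "omodule OL Y"
  shows "E \<inter> Y \<noteq> E' \<inter> Y \<or> msum E Y \<noteq> msum E' Y"
proof (rule ccontr)
  assume "\<not> ?thesis"
  then have eq1: "E \<inter> Y = E' \<inter> Y" and eq2: "msum E Y = msum E' Y" by auto
  have "E' \<subseteq> E"
  proof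
    fix x assume x: "x \<in> E'"
    then have "x \<in> msum E Y" using eq2 msum_subset_left[OF assms(4)] by blast
    then obtain a b where ab: "x = vadd a b" "a \<in> E" "b \<in> Y" unfolding msum_def by blast
    have "b = vadd x (vsc (-1) a)" using ab(1) by (simp add: vadd_def vsc_def fun_eq_iff)
    then have "b \<in> E'" using x ab(2) assms(1) omodule_vadd[OF assms(3)] omodule_vsc[OF assms(3)] by auto
    then have "b \<in> E" using eq1 ab(3) by blast
    then show "x \<in> E" using ab omodule_vadd[OF assms(2)] by simp
  qed
  then show False using assms(1) by blast
qed

lemma olength_le_add:
  assumes X: "lattice n OL X" and Y: "lattice n OL Y" and Z: "lattice n OL Z"
    and XY: "X \<subseteq> Y" and YZ: "Y \<subseteq> Z"
  shows "olength OL X Z \<le> olength OL X Y + olength OL Y Z"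
proof -
  define M where "M = olength OL X Z"
  obtain E where E: "E 0 = X" "E M = Z" "module_chain E M"
    using olength_module_chain_exists[OF X Z] XY YZ unfolding M_def by blast
  have Emono: "\<forall>j<M. E j \<subseteq> E (Suc j)" and Eom: "\<forall>j\<le>M. omodule OL (E j)"
    using E(3) unfolding module_chain_def by auto
  have oY: "omodule OL Y" using lattice_omodule[OF Y] .
  define D1 where "D1 = (\<lambda>j. E j \<inter> Y)"
  define D2 where "D2 = (\<lambda>j. msum (E j) Y)"
  define S1 where "S1 = {j. j < M \<and> D1 j \<noteq> D1 (Suc j)}"
  define S2 where "S2 = {j. j < M \<and> D2 j \<noteq> D2 (Suc j)}"
  have "card S1 \<le> olength OL X Y" unfolding S1_def
  proof (rule card_strict_steps_le_olength[OF X Y])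
    show "\<forall>j<M. D1 j \<subseteq> D1 (Suc j)" using Emono unfolding D1_def by auto
    show "\<forall>j\<le>M. omodule OL (D1 j)" using Eom oY unfolding D1_def by (simp add: omodule_Int)
    show "D1 0 = X" "D1 M = Y" unfolding D1_def using E XY YZ by auto
  qed
  moreover have "card S2 \<le> olength OL Y Z" unfolding S2_def
  proof (rule card_strict_steps_le_olength[OF Y Z])
    show "\<forall>j<M. D2 j \<subseteq> D2 (Suc j)" using Emono unfolding D2_def msum_def by blast
    show "\<forall>j\<le>M. omodule OL (D2 j)" using Eom oY unfolding D2_def by (simp add: omodule_msum)
    show "D2 0 = Y" "D2 M = Z"
      unfolding D2_def using E XY YZ oY lattice_omodule[OF X] lattice_omodule[OF Z]
      by (simp_all add: msum_absorb msum_commute[of Z])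
  qed
  moreover have "{..<M} \<subseteq> S1 \<union> S2"
  proof
    fix j assume j: "j \<in> {..<M}"
    then have "E j \<subset> E (Suc j)" "omodule OL (E j)" "omodule OL (E (Suc j))"
      using E(3) unfolding module_chain_def by auto
    from strict_subset_Int_or_msum[OF this oY]
    show "j \<in> S1 \<union> S2" using j unfolding S1_def S2_def D1_def D2_def by auto
  qed
  then have "M \<le> card (S1 \<union> S2)"
    using card_mono[of "S1 \<union> S2" "{..<M}"] unfolding S1_def S2_def by simp
  ultimately show ?thesis using card_Un_le[of S1 S2] unfolding M_def by linarith
qed

lemma olength_add_le:
  assumes X: "lattice n OL X" and Y: "lattice n OL Y" and Z: "lattice n OL Z"
    and XY: "X \<subseteq> Y" and YZ: "Y \<subseteq> Z"
  shows "olength OL X Y + olength OL Y Z \<le> olength OL X Z"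
proof -
  define p where "p = olength OL X Y"
  define q where "q = olength OL Y Z"
  obtain C1 where C1: "C1 0 = X" "C1 p = Y" "module_chain C1 p"
    using olength_module_chain_exists[OF X Y XY] unfolding p_def by blast
  obtain C2 where C2: "C2 0 = Y" "C2 q = Z" "module_chain C2 q"
    using olength_module_chain_exists[OF Y Z YZ] unfolding q_def by blast
  define E where "E = (\<lambda>j. if j \<le> p then C1 j else C2 (j - p))"
  have E2: "E j = C2 (j - p)" if "p \<le> j" for j
    unfolding E_def using C1(2) C2(1) that by auto
  have "module_chain E (p + q)"
    unfolding module_chain_def
  proof (intro conjI allI impI)
    fix j assume j: "j < p + q"
    show "E j \<subset> E (Suc j)"
    proof (cases "j < p")
      case True then show ?thesis using C1(3) unfolding module_chain_def E_def by auto
    next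
      case False
      then show ?thesis using E2[of j] E2[of "Suc j"] C2(3) j
        unfolding module_chain_def by (auto simp: Suc_diff_le)
    qed
  next
    fix j assume j: "j \<le> p + q"
    show "omodule OL (E j)"
    proof (cases "j \<le> p")
      case True then show ?thesis using C1(3) unfolding module_chain_def E_def by simp
    next
      case False then show ?thesis using C2(3) E2[of j] j unfolding module_chain_def by simp
    qed
  qed
  moreover have "E 0 = X" using C1(1) unfolding E_def by simp
  moreover have "E (p + q) = Z" using C2(2) E2[of "p + q"] by simp
  ultimately have "p + q \<le> olength OL X Z" by (rule olength_ge[OF X Z])
  then show ?thesis unfolding p_def q_def .
qed

lemma olength_add:
  assumes "lattice n OL X" "lattice n OL Y" "lattice n OL Z" "X \<subseteq> Y" "Y \<subseteq> Z"
  shows "olength OL X Z = olength OL X Y + olength OL Y Z"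
  using olength_le_add[OF assms] olength_add_le[OF assms] by simp

lemma olength_image_vsc:
  assumes c: "c \<noteq> 0"
  shows "olength OL (vsc c ` X) (vsc c ` Y) = olength OL X Y"
proof -
  have inverse_image: "vsc (inverse c) ` vsc c ` S = S" for S using c by (simp add: image_image)
  have "(\<exists>C. C 0 = vsc c ` X \<and> C m = vsc c ` Y \<and> module_chain C m) \<longleftrightarrow>
        (\<exists>C. C 0 = X \<and> C m = Y \<and> module_chain C m)" for m
  proof
    assume "\<exists>C. C 0 = vsc c ` X \<and> C m = vsc c ` Y \<and> module_chain C m"
    then obtain C where C: "C 0 = vsc c ` X" "C m = vsc c ` Y" "module_chain C m" by blast
    then show "\<exists>C. C 0 = X \<and> C m = Y \<and> module_chain C m"
      using module_chain_image_vsc[OF C(3), of "inverse c"] c inverse_image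
      by (intro exI[of _ "\<lambda>j. vsc (inverse c) ` C j"]) simp
  next
    assume "\<exists>C. C 0 = X \<and> C m = Y \<and> module_chain C m"
    then obtain C where C: "C 0 = X" "C m = Y" "module_chain C m" by blast
    then show "\<exists>C. C 0 = vsc c ` X \<and> C m = vsc c ` Y \<and> module_chain C m"
      using module_chain_image_vsc[OF C(3) c] by (intro exI[of _ "\<lambda>j. vsc c ` C j"]) simp
  qed
  then show ?thesis unfolding olength_module_chain by simp
qed

definition pscale :: "int \<Rightarrow> (nat \<Rightarrow> 'L) set \<Rightarrow> (nat \<Rightarrow> 'L) set" where
  "pscale t X = vsc (\<pi> powi (- t)) ` X"

lemma pi_powi_nonzero: "\<pi> powi t \<noteq> 0"
  using pi_nonzero by simp

lemma pscale_0 [simp]: "pscale 0 X = X"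
  unfolding pscale_def by simp

lemma pscale_pscale: "pscale s (pscale t X) = pscale (s + t) X"
  unfolding pscale_def image_image using pi_nonzero
  by (simp add: power_int_add[symmetric] add.commute)

lemma image_vsc_inverse_pi_pscale: "vsc (inverse \<pi>) ` pscale t X = pscale (t + 1) X"
proof -
  have "inverse \<pi> * \<pi> powi (- t) = \<pi> powi (- (t + 1))"
    using pi_nonzero by (simp add: power_int_diff power_int_minus field_simps)
  then show ?thesis unfolding pscale_def image_image by simp
qed

lemma lattice_pscale: "lattice n OL X \<Longrightarrow> lattice n OL (pscale t X)"
  unfolding pscale_def by (rule lattice_image_vsc[OF _ pi_powi_nonzero])

lemma olength_pscale: "olength OL (pscale t X) (pscale t Y) = olength OL X Y"
  unfolding pscale_def by (rule olength_image_vsc[OF pi_powi_nonzero])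

lemma pscale_mono: "X \<subseteq> Y \<Longrightarrow> pscale t X \<subseteq> pscale t Y"
  unfolding pscale_def by (rule image_mono)

lemma lattice_eq_if_msum_pi:
  assumes A: "lattice n OL A" and M: "lattice n OL M" and AM: "A \<subseteq> M"
    and eq: "msum A (vsc \<pi> ` M) = M"
  shows "M = A"
proof -
  have oA: "omodule OL A" using lattice_omodule[OF A] .
  have approx: "\<forall>x\<in>M. \<exists>a\<in>A. \<exists>z\<in>M. x = vadd a (vsc (\<pi> ^ j) z)" for j
  proof (induction j)
    case 0
    show ?case
    proof
      fix x assume "x \<in> M"
      moreover have "x = vadd vzero (vsc (\<pi> ^ 0) x)" by simp
      ultimately show "\<exists>a\<in>A. \<exists>z\<in>M. x = vadd a (vsc (\<pi> ^ 0) z)" using omodule_vzero[OF oA] by blast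
    qed
  next
    case (Suc j)
    show ?case
    proof
      fix x assume "x \<in> M"
      then obtain a z where az: "a \<in> A" "z \<in> M" "x = vadd a (vsc (\<pi> ^ j) z)" using Suc by blast
      then obtain a' z' where az': "z = vadd a' (vsc \<pi> z')" "a' \<in> A" "z' \<in> M"
        using eq unfolding msum_def by blast
      have "x = vadd (vadd a (vsc (\<pi> ^ j) a')) (vsc (\<pi> ^ Suc j) z')"
        using az(3) az'(1) by (simp add: vadd_def vsc_def fun_eq_iff algebra_simps)
      moreover have "vadd a (vsc (\<pi> ^ j) a') \<in> A"
        using az(1) az'(2) omodule_vadd[OF oA] omodule_vsc[OF oA] by simp
      ultimately show "\<exists>a\<in>A. \<exists>z\<in>M. x = vadd a (vsc (\<pi> ^ Suc j) z)" using az'(3) by blast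
    qed
  qed
  obtain e where e: "basis e" "A = ospan e" using A lattice_iff by blast
  obtain N where N: "M \<subseteq> scaled_ospan e N" using lattice_subset_scaled_ospan[OF e(1) M] .
  have "M \<subseteq> A"
  proof
    fix x assume "x \<in> M"
    then obtain a z where "a \<in> A" "z \<in> M" "x = vadd a (vsc (\<pi> ^ N) z)" using approx by blast
    moreover have "vsc (\<pi> ^ N) z \<in> A"
      using vsc_pi_power_scaled_ospan[OF e(1)] N \<open>z \<in> M\<close> e(2) by blast
    ultimately show "x \<in> A" using omodule_vadd[OF oA] by simp
  qed
  then show ?thesis using AM by blast
qed

lemma length_one_pi_subset:
  assumes A: "lattice n OL A" and M: "lattice n OL M" and AM: "A \<subseteq> M"
    and len: "olength OL A M = 1"
  shows "vsc \<pi> ` M \<subseteq> A"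
proof -
  have oA: "omodule OL A" and oM: "omodule OL M" using A M by (simp_all add: lattice_omodule)
  define D where "D = msum A (vsc \<pi> ` M)"
  have "omodule OL D" unfolding D_def using oA oM by (simp add: omodule_msum omodule_image_vsc)
  moreover have "A \<subseteq> D"
    unfolding D_def by (rule msum_subset_left[OF omodule_image_vsc[OF oM]])
  moreover have "D \<subseteq> M"
    unfolding D_def msum_def using AM omodule_vadd[OF oM] omodule_vsc[OF oM OL_pi] by blast
  ultimately have "D = A \<or> D = M" using olength_eq_1_between[OF A M _ _ _ len] by blast
  moreover have "D \<noteq> M"
  proof
    assume "D = M"
    then have "M = A" by (rule lattice_eq_if_msum_pi[OF A M AM, folded D_def])
    then show False using len olength_refl[OF oA] by simp
  qed
  ultimately have "D = A" by blast
  then show ?thesis using msum_subset_right[OF oA, of "vsc \<pi> ` M"] unfolding D_def by simp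
qed

lemma length_one_generator:
  assumes A: "lattice n OL A" and M: "lattice n OL M" and AM: "A \<subseteq> M"
    and len: "olength OL A M = 1"
  obtains x0 where "x0 \<in> M" "x0 \<notin> A" "\<forall>y\<in>M. \<exists>a\<in>A. \<exists>c\<in>OL. y = vadd a (vsc c x0)"
proof -
  have oA: "omodule OL A" and oM: "omodule OL M" using A M by (simp_all add: lattice_omodule)
  have "M \<noteq> A" using len olength_refl[OF oA] by auto
  then obtain x0 where x0: "x0 \<in> M" "x0 \<notin> A" using AM by blast
  define D where "D = msum A {vsc c x0 | c. c \<in> OL}"
  have "omodule OL D" unfolding D_def using oA omodule_multiples by (rule omodule_msum)
  moreover have "A \<subseteq> D" unfolding D_def by (rule msum_subset_left[OF omodule_multiples])
  moreover have "D \<subseteq> M"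
  proof
    fix x assume "x \<in> D"
    then obtain a c where ac: "x = vadd a (vsc c x0)" "a \<in> A" "c \<in> OL"
      unfolding D_def msum_def by blast
    then have "a \<in> M" "vsc c x0 \<in> M" using AM omodule_vsc[OF oM _ x0(1)] by auto
    then show "x \<in> M" using ac(1) omodule_vadd[OF oM] by simp
  qed
  moreover have "x0 \<in> D"
  proof -
    have "x0 \<in> {vsc c x0 | c. c \<in> OL}" by (rule CollectI, rule exI[of _ 1]) simp
    then show ?thesis unfolding D_def by (rule subsetD[OF msum_subset_right[OF oA]])
  qed
  ultimately have "D = M" using olength_eq_1_between[OF A M _ _ _ len] x0(2) by blast
  have "\<forall>y\<in>M. \<exists>a\<in>A. \<exists>c\<in>OL. y = vadd a (vsc c x0)"
  proof
    fix y assume "y \<in> M"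
    then have "y \<in> D" using \<open>D = M\<close> by simp
    then show "\<exists>a\<in>A. \<exists>c\<in>OL. y = vadd a (vsc c x0)" unfolding D_def msum_def by blast
  qed
  then show thesis using that x0 by blast
qed

lemma pscale_periodic:
  assumes I: "\<And>i t. i \<in> I \<Longrightarrow> i + 2 * int n * t \<in> I"
    and N: "\<forall>i\<in>I. N (i + 2 * int n) = vsc (inverse \<pi>) ` N i" and i: "i \<in> I"
  shows "N (i + 2 * int n * t) = pscale t (N i)"
proof -
  have up: "N (j + 2 * int n * int m) = pscale (int m) (N j)" if j: "j \<in> I" for j m
  proof (induction m)
    case (Suc m)
    have "N (j + 2 * int n * int (Suc m)) = N ((j + 2 * int n * int m) + 2 * int n)"
      by (simp add: algebra_simps)
    also have "\<dots> = vsc (inverse \<pi>) ` N (j + 2 * int n * int m)" using N I[OF j] by blast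
    also have "\<dots> = pscale (int m + 1) (N j)" using Suc image_vsc_inverse_pi_pscale by simp
    finally show ?case by (simp add: ac_simps)
  qed simp
  show ?thesis
  proof (cases "t \<ge> 0")
    case True
    then show ?thesis using up[OF i, of "nat t"] by simp
  next
    case False
    define m where "m = nat (- t)"
    have i': "i + 2 * int n * t \<in> I" using I[OF i] .
    have eq: "(i + 2 * int n * t) + 2 * int n * int m = i"
      using False unfolding m_def by (simp add: algebra_simps)
    have "N i = pscale (int m) (N (i + 2 * int n * t))" using up[OF i', of m] unfolding eq .
    then show ?thesis using False unfolding m_def by (simp add: pscale_pscale)
  qed
qed

end

section \<open>Duality\<close>

locale symplectic_space = lattice_space v OL \<pi> n
  for v :: "'L::field \<Rightarrow> int" and OL :: "'L set" and \<pi> :: 'L and n :: nat +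
  fixes B :: "(nat \<Rightarrow> 'L) \<Rightarrow> (nat \<Rightarrow> 'L) \<Rightarrow> 'L"
  assumes symplectic: "symplectic n B"
begin

lemma B_add_left:
  "x \<in> vecs n \<Longrightarrow> y \<in> vecs n \<Longrightarrow> z \<in> vecs n \<Longrightarrow> B (vadd x y) z = B x z + B y z"
  using symplectic unfolding symplectic_def by blast

lemma B_add_right:
  "x \<in> vecs n \<Longrightarrow> y \<in> vecs n \<Longrightarrow> z \<in> vecs n \<Longrightarrow> B z (vadd x y) = B z x + B z y"
  using symplectic unfolding symplectic_def by blast

lemma B_vsc_left: "x \<in> vecs n \<Longrightarrow> z \<in> vecs n \<Longrightarrow> B (vsc c x) z = c * B x z"
  using symplectic unfolding symplectic_def by blast

lemma B_vsc_right: "x \<in> vecs n \<Longrightarrow> z \<in> vecs n \<Longrightarrow> B z (vsc c x) = c * B z x"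
  using symplectic unfolding symplectic_def by blast

lemma B_self: "x \<in> vecs n \<Longrightarrow> B x x = 0"
  using symplectic unfolding symplectic_def by blast

lemma B_nondegenerate: "x \<in> vecs n \<Longrightarrow> (\<And>y. y \<in> vecs n \<Longrightarrow> B x y = 0) \<Longrightarrow> x = vzero"
  using symplectic unfolding symplectic_def by blast

lemma B_vzero_left [simp]: "z \<in> vecs n \<Longrightarrow> B vzero z = 0"
  using B_vsc_left[of vzero z 0] by simp

lemma B_vzero_right [simp]: "z \<in> vecs n \<Longrightarrow> B z vzero = 0"
  using B_vsc_right[of vzero z 0] by simp

lemma B_antisym:
  assumes "x \<in> vecs n" "y \<in> vecs n"
  shows "B x y = - B y x"
proof -
  have "0 = B (vadd x y) (vadd x y)" using B_self assms by simp
  also have "\<dots> = B x x + B x y + (B y x + B y y)"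
    using assms by (simp add: B_add_left B_add_right)
  finally show ?thesis using B_self assms by (simp add: eq_neg_iff_add_eq_0)
qed

lemma B_sum_left:
  assumes "finite S" "\<And>i. i \<in> S \<Longrightarrow> f i \<in> vecs n" "z \<in> vecs n"
  shows "B (\<lambda>j. \<Sum>i\<in>S. f i j) z = (\<Sum>i\<in>S. B (f i) z)"
  using assms
proof (induction S rule: finite_induct)
  case (insert a S)
  have "(\<lambda>j. \<Sum>i\<in>insert a S. f i j) = vadd (f a) (\<lambda>j. \<Sum>i\<in>S. f i j)"
    using insert by (simp add: vadd_def)
  then show ?case using insert by (simp add: B_add_left vecs_sum)
qed simp

lemma B_sum_right:
  assumes "finite S" "\<And>i. i \<in> S \<Longrightarrow> f i \<in> vecs n" "z \<in> vecs n"
  shows "B z (\<lambda>j. \<Sum>i\<in>S. f i j) = (\<Sum>i\<in>S. B z (f i))"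
  using assms
proof (induction S rule: finite_induct)
  case (insert a S)
  have "(\<lambda>j. \<Sum>i\<in>insert a S. f i j) = vadd (f a) (\<lambda>j. \<Sum>i\<in>S. f i j)"
    using insert by (simp add: vadd_def)
  then show ?case using insert by (simp add: B_add_right vecs_sum)
qed simp

lemma B_lincomb_left:
  assumes "\<And>i. i < 2*n \<Longrightarrow> b i \<in> vecs n" "z \<in> vecs n"
  shows "B (lincomb n a b) z = (\<Sum>i<2*n. a i * B (b i) z)"
  unfolding lincomb_as_sum using assms by (subst B_sum_left) (auto simp: B_vsc_left)

lemma B_lincomb_right:
  assumes "\<And>i. i < 2*n \<Longrightarrow> b i \<in> vecs n" "z \<in> vecs n"
  shows "B z (lincomb n a b) = (\<Sum>i<2*n. a i * B z (b i))"
  unfolding lincomb_as_sum using assms by (subst B_sum_right) (auto simp: B_vsc_right)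

lemma vzero_if_B_basis_zero:
  assumes b: "basis b" and x: "x \<in> vecs n" and zero: "\<And>j. j < 2*n \<Longrightarrow> B x (b j) = 0"
  shows "x = vzero"
proof (rule B_nondegenerate[OF x])
  fix y :: "nat \<Rightarrow> 'L" assume "y \<in> vecs n"
  then obtain a where "y = lincomb n a b" using b unfolding basis_def by blast
  then show "B x y = 0" using zero basis_vecs[OF b] x by (simp add: B_lincomb_right)
qed

lemma B_lincomb_biorthogonal:
  assumes b'v: "\<And>r. r < 2*n \<Longrightarrow> b' r \<in> vecs n" and bj: "b j \<in> vecs n" and j: "j < 2*n"
    and bi: "\<forall>r<2*n. \<forall>j<2*n. B (b' r) (b j) = (if r = j then 1 else 0)"
  shows "B (lincomb n c b') (b j) = c j"
proof -
  have "B (lincomb n c b') (b j) = (\<Sum>r<2*n. c r * B (b' r) (b j))"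
    using b'v bj by (simp add: B_lincomb_left)
  also have "\<dots> = (\<Sum>r<2*n. if r = j then c j else 0)"
    by (rule sum.cong) (auto simp: bi j)
  finally show ?thesis using j by simp
qed

lemma basis_if_biorthogonal:
  assumes b: "basis b" and b'v: "\<And>r. r < 2*n \<Longrightarrow> b' r \<in> vecs n"
    and bi: "\<forall>r<2*n. \<forall>j<2*n. B (b' r) (b j) = (if r = j then 1 else 0)"
  shows "basis b'"
  unfolding basis_def
proof (intro conjI allI impI ballI)
  fix i assume "i < 2*n" then show "b' i \<in> vecs n" by (rule b'v)
next
  fix c :: "nat \<Rightarrow> 'L" and i assume c: "lincomb n c b' = vzero" and i: "i < 2*n"
  show "c i = 0"
    using B_lincomb_biorthogonal[OF b'v basis_vecs[OF b i] i bi, of c] c basis_vecs[OF b i] by simp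
next
  fix x :: "nat \<Rightarrow> 'L" assume x: "x \<in> vecs n"
  define c where "c = (\<lambda>r. B x (b r))"
  define y where "y = vadd x (vsc (-1) (lincomb n c b'))"
  have "y = vzero"
  proof (rule vzero_if_B_basis_zero[OF b])
    show "y \<in> vecs n" unfolding y_def using x b'v by simp
    fix j assume j: "j < 2*n"
    then show "B y (b j) = 0"
      using B_lincomb_biorthogonal[OF b'v basis_vecs[OF b j] j bi, of c] x b'v basis_vecs[OF b j]
      unfolding y_def by (simp add: B_add_left B_vsc_left c_def)
  qed
  then have "x = lincomb n c b'" using vadd_diff_cancel[of x 1 "lincomb n c b'"] unfolding y_def by simp
  then show "\<exists>c. x = lincomb n c b'" by blast
qed

lemma dual_basis_exists:
  assumes b: "basis b"
  obtains b' where "basis b'" "\<forall>r<2*n. \<forall>j<2*n. B (b' r) (b j) = (if r = j then 1 else 0)"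
proof -
  note bv = basis_vecs[OF b]
  have "\<exists>h. \<forall>r<2*n. \<forall>j<2*n. (\<Sum>i<2*n. h r i * B (b i) (b j)) = (if r = j then 1 else 0)"
  proof (rule injective_matrix_left_inverse)
    fix c assume c: "\<forall>j<2*n. (\<Sum>i<2*n. c i * B (b i) (b j)) = 0"
    have "lincomb n c b = vzero"
      using c bv by (intro vzero_if_B_basis_zero[OF b]) (simp_all add: B_lincomb_left)
    then show "\<forall>i<2*n. c i = 0" using b unfolding basis_def by blast
  qed
  then obtain h where h: "\<forall>r<2*n. \<forall>j<2*n. (\<Sum>i<2*n. h r i * B (b i) (b j)) = (if r = j then 1 else 0)"
    by blast
  define b' where "b' = (\<lambda>r. lincomb n (h r) b)"
  have b'v: "\<And>r. b' r \<in> vecs n" unfolding b'_def using bv by simp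
  have bi: "\<forall>r<2*n. \<forall>j<2*n. B (b' r) (b j) = (if r = j then 1 else 0)"
    using h bv unfolding b'_def by (simp add: B_lincomb_left)
  show thesis using that basis_if_biorthogonal[OF b b'v bi] bi by blast
qed

abbreviation dual :: "(nat \<Rightarrow> 'L) set \<Rightarrow> (nat \<Rightarrow> 'L) set" where
  "dual \<Lambda> \<equiv> dual_lattice n OL B \<Lambda>"

lemma dual_iff: "x \<in> dual \<Lambda> \<longleftrightarrow> x \<in> vecs n \<and> (\<forall>y\<in>\<Lambda>. B x y \<in> OL)"
  unfolding dual_lattice_def by blast

lemma dual_antimono: "\<Lambda> \<subseteq> \<Lambda>' \<Longrightarrow> dual \<Lambda>' \<subseteq> dual \<Lambda>"
  unfolding dual_lattice_def by blast

lemma dual_ospan: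
  assumes b: "basis b" and b': "basis b'" and e: "e \<noteq> 0" "e \<in> OL" "inverse e \<in> OL"
    and bi: "\<forall>r<2*n. \<forall>j<2*n. B (b' r) (b j) = (if r = j then e else 0)"
  shows "dual (ospan b) = ospan b'"
proof -
  note bv = basis_vecs[OF b] and b'v = basis_vecs[OF b']
  have Bx: "B x (b j) = coord b' x j * e" if x: "x \<in> vecs n" and j: "j < 2*n" for x j
  proof -
    have "B x (b j) = B (lincomb n (coord b' x) b') (b j)" using lincomb_coord[OF b' x] by simp
    also have "\<dots> = (\<Sum>r<2*n. coord b' x r * B (b' r) (b j))"
      using b'v bv j by (simp add: B_lincomb_left)
    also have "\<dots> = (\<Sum>r<2*n. if r = j then coord b' x j * e else 0)"
      by (rule sum.cong) (auto simp: bi j)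
    finally show ?thesis using j by simp
  qed
  have "x \<in> dual (ospan b) \<longleftrightarrow> x \<in> ospan b'" for x
  proof
    assume "x \<in> dual (ospan b)"
    then have x: "x \<in> vecs n" "\<forall>y\<in>ospan b. B x y \<in> OL" by (auto simp: dual_iff)
    have "coord b' x i \<in> OL" if i: "i < 2*n" for i
    proof -
      have "coord b' x i * e \<in> OL" using x(2) basis_in_ospan[OF b i] Bx[OF x(1) i] by metis
      then have "coord b' x i * e * inverse e \<in> OL" using e by simp
      then show ?thesis using e(1) by (simp add: mult.assoc)
    qed
    then show "x \<in> ospan b'" using x(1) by (simp add: ospan_iff[OF b'])
  next
    assume "x \<in> ospan b'"
    then have x: "x \<in> vecs n" "\<forall>i<2*n. coord b' x i \<in> OL" by (auto simp: ospan_iff[OF b'])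
    have "B x y \<in> OL" if "y \<in> ospan b" for y
    proof -
      obtain a where a: "y = lincomb n a b" "\<forall>i. a i \<in> OL" using \<open>y \<in> ospan b\<close> unfolding ospan_def by blast
      have "B x y = (\<Sum>j<2*n. a j * (coord b' x j * e))"
        unfolding a using bv x by (simp add: B_lincomb_right Bx)
      also have "\<dots> \<in> OL" using a x e by (intro OL_sum) auto
      finally show ?thesis .
    qed
    then show "x \<in> dual (ospan b)" using x by (simp add: dual_iff)
  qed
  then show ?thesis by (rule Set.set_eqI)
qed

lemma lattice_dual:
  assumes "lattice n OL M"
  shows "lattice n OL (dual M)" and dual_dual: "dual (dual M) = M"
proof -
  obtain b where b: "basis b" "M = ospan b" using assms lattice_iff by blast
  obtain b' where b': "basis b'" "\<forall>r<2*n. \<forall>j<2*n. B (b' r) (b j) = (if r = j then 1 else 0)"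
    using dual_basis_exists[OF b(1)] by blast
  have dM: "dual M = ospan b'" using dual_ospan[OF b(1) b'(1), of 1] b' b(2) by simp
  then show "lattice n OL (dual M)" using b'(1) lattice_iff by blast
  have "B (b r) (b' j) = (if r = j then -1 else 0)" if "r < 2*n" "j < 2*n" for r j
    using b'(2) B_antisym[OF basis_vecs[OF b(1)] basis_vecs[OF b'(1)], of r j] that by auto
  then have "dual (ospan b') = ospan b" using dual_ospan[OF b'(1) b(1), of "-1"] by auto
  then show "dual (dual M) = M" using dM b(2) by simp
qed

lemma dual_image_vsc:
  assumes "\<Lambda> \<subseteq> vecs n" "c \<noteq> 0"
  shows "dual (vsc c ` \<Lambda>) = vsc (inverse c) ` dual \<Lambda>"
proof (intro Set.set_eqI iffI)
  fix x assume x: "x \<in> dual (vsc c ` \<Lambda>)"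
  have "vsc c x \<in> dual \<Lambda>" using x assms by (auto simp: dual_iff B_vsc_left B_vsc_right subsetD)
  then have "vsc (inverse c) (vsc c x) \<in> vsc (inverse c) ` dual \<Lambda>" by blast
  then show "x \<in> vsc (inverse c) ` dual \<Lambda>" using assms(2) by simp
next
  fix x assume "x \<in> vsc (inverse c) ` dual \<Lambda>"
  then obtain y where y: "x = vsc (inverse c) y" "y \<in> dual \<Lambda>" by blast
  have "B x (vsc c z) \<in> OL" if z: "z \<in> \<Lambda>" for z
  proof -
    have "B x (vsc c z) = B y z" using y z assms by (auto simp: dual_iff B_vsc_left B_vsc_right subsetD)
    then show ?thesis using y z by (simp add: dual_iff)
  qed
  then show "x \<in> dual (vsc c ` \<Lambda>)" using y by (auto simp: dual_iff)
qed

lemma dual_pscale: "X \<subseteq> vecs n \<Longrightarrow> dual (pscale t X) = pscale (- t) (dual X)"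
  unfolding pscale_def using pi_powi_nonzero by (simp add: dual_image_vsc power_int_minus)

lemma dual_mem_iff_generator:
  assumes AM: "A \<subseteq> M" and Av: "A \<subseteq> vecs n" and x0: "x0 \<in> M" "x0 \<in> vecs n"
    and gen: "\<forall>y\<in>M. \<exists>a\<in>A. \<exists>c\<in>OL. y = vadd a (vsc c x0)"
  shows "y \<in> dual M \<longleftrightarrow> y \<in> dual A \<and> B y x0 \<in> OL"
proof
  assume y: "y \<in> dual M"
  then have "y \<in> dual A" using dual_antimono[OF AM] by blast
  moreover have "B y x0 \<in> OL" using y x0(1) by (simp add: dual_iff)
  ultimately show "y \<in> dual A \<and> B y x0 \<in> OL" by blast
next
  assume y: "y \<in> dual A \<and> B y x0 \<in> OL"
  then have yv: "y \<in> vecs n" by (simp add: dual_iff)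
  have "B y z \<in> OL" if "z \<in> M" for z
  proof -
    obtain a c where ac: "a \<in> A" "c \<in> OL" "z = vadd a (vsc c x0)" using gen \<open>z \<in> M\<close> by blast
    have "B y z = B y a + c * B y x0" using ac Av x0 yv by (auto simp: B_add_right B_vsc_right)
    then show ?thesis using y ac by (auto simp: dual_iff)
  qed
  then show "y \<in> dual M" using yv by (simp add: dual_iff)
qed

lemma dual_length_one_neq:
  assumes A: "lattice n OL A" and M: "lattice n OL M" and AM: "A \<subseteq> M"
    and len: "olength OL A M = 1"
  shows "dual M \<noteq> dual A"
proof
  assume eq: "dual M = dual A"
  obtain x0 where x0: "x0 \<in> M" "x0 \<notin> A" "\<forall>y\<in>M. \<exists>a\<in>A. \<exists>c\<in>OL. y = vadd a (vsc c x0)"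
    using length_one_generator[OF A M AM len] by blast
  have x0v: "x0 \<in> vecs n" using x0(1) lattice_vecs[OF M] by blast
  have "B x0 y \<in> OL" if y: "y \<in> dual A" for y
  proof -
    have "y \<in> dual M" using y eq by simp
    then have "B y x0 \<in> OL" using x0(1) by (simp add: dual_iff)
    moreover have "B x0 y = - B y x0" using y by (intro B_antisym[OF x0v]) (simp add: dual_iff)
    ultimately show ?thesis by simp
  qed
  then have "x0 \<in> dual (dual A)" using x0v by (simp add: dual_iff)
  then show False using dual_dual[OF A] x0(2) by simp
qed

lemma dual_length_one_between:
  assumes A: "lattice n OL A" and M: "lattice n OL M" and AM: "A \<subseteq> M"
    and len: "olength OL A M = 1"
    and D: "omodule OL D" "dual M \<subseteq> D" "D \<subseteq> dual A"
  shows "D = dual M \<or> D = dual A"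
proof (cases "D \<subseteq> dual M")
  case False
  obtain x0 where x0: "x0 \<in> M" "x0 \<notin> A" "\<forall>y\<in>M. \<exists>a\<in>A. \<exists>c\<in>OL. y = vadd a (vsc c x0)"
    using length_one_generator[OF A M AM len] by blast
  have x0v: "x0 \<in> vecs n" using x0(1) lattice_vecs[OF M] by blast
  note mem_iff = dual_mem_iff_generator[OF AM lattice_vecs[OF A] x0(1) x0v x0(3)]
  have odA: "omodule OL (dual A)" using lattice_omodule[OF lattice_dual(1)[OF A]] .
  obtain c where c: "c \<in> D" "c \<notin> dual M" using False by blast
  then have cA: "c \<in> dual A" and cx0: "B c x0 \<notin> OL" using mem_iff D(3) by auto
  have cv: "c \<in> vecs n" using cA by (simp add: dual_iff)
  have "y \<in> D" if y: "y \<in> dual A" for y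
  proof -
    have yv: "y \<in> vecs n" using y by (simp add: dual_iff)
    define lam where "lam = B y x0 / B c x0"
    have "vsc \<pi> x0 \<in> A" using length_one_pi_subset[OF A M AM len] x0(1) by blast
    then have "\<pi> ^ Suc 0 * B y x0 \<in> OL" using y yv x0v by (auto simp: dual_iff B_vsc_right)
    then have lam: "lam \<in> OL" unfolding lam_def by (rule OL_divide) (use cx0 in simp)
    define y' where "y' = vadd y (vsc (- lam) c)"
    have "y' \<in> dual A" unfolding y'_def using y cA lam omodule_vadd[OF odA] omodule_vsc[OF odA] by simp
    moreover have "B y' x0 = 0"
      using cx0 yv cv x0v unfolding y'_def lam_def by (auto simp: B_add_left B_vsc_left)
    ultimately have "y' \<in> D" using mem_iff D(2) by auto
    then have "vadd y' (vsc lam c) \<in> D" using c(1) lam omodule_vadd[OF D(1)] omodule_vsc[OF D(1)] by simp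
    then show "y \<in> D" unfolding y'_def vadd_diff_cancel .
  qed
  then show ?thesis using D(3) by blast
qed (use D(2) in blast)

lemma length_one_dual:
  assumes A: "lattice n OL A" and M: "lattice n OL M" and AM: "A \<subseteq> M"
    and len: "olength OL A M = 1"
  shows "dual M \<subseteq> dual A" "olength OL (dual M) (dual A) = 1"
proof -
  show sub: "dual M \<subseteq> dual A" using AM by (rule dual_antimono)
  show "olength OL (dual M) (dual A) = 1"
    using sub dual_length_one_neq[OF A M AM len] dual_length_one_between[OF A M AM len]
      lattice_omodule[OF lattice_dual(1)[OF A]] lattice_omodule[OF lattice_dual(1)[OF M]]
    by (intro olength_eq_1I) auto
qed

text \<open>The alternating property of B is used here and only here: for M = A + O_L x0, the
  pairing of pi^(-s) M with x0 reduces by \<langle>x0, x0\<rangle> = 0 to the pairing of pi^(-s) x0 with A,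
  which lies in O_L because pi^(-s) M \<subseteq> pi^(-s) C = A^perp.\<close>

lemma pscale_subset_dual_of_length_one:
  assumes A: "lattice n OL A" and M: "lattice n OL M" and AM: "A \<subseteq> M" and MC: "M \<subseteq> C"
    and len: "olength OL A M = 1" and dA: "dual A = pscale s C"
  shows "pscale s M \<subseteq> dual M"
proof -
  obtain x0 where x0: "x0 \<in> M" "x0 \<notin> A" "\<forall>y\<in>M. \<exists>a\<in>A. \<exists>c\<in>OL. y = vadd a (vsc c x0)"
    using length_one_generator[OF A M AM len] by blast
  define \<rho> where "\<rho> = \<pi> powi (- s)"
  have Mv: "M \<subseteq> vecs n" and Av: "A \<subseteq> vecs n" using lattice_vecs A M by auto
  have x0v: "x0 \<in> vecs n" using x0 Mv by blast
  have inA: "vsc \<rho> x \<in> dual A" if "x \<in> M" for x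
  proof -
    have "vsc \<rho> x \<in> vsc \<rho> ` C" using that MC by blast
    then show ?thesis using dA unfolding pscale_def \<rho>_def by simp
  qed
  have key: "B (vsc \<rho> x) x0 \<in> OL" if x: "x \<in> M" for x
  proof -
    obtain a c where ac: "a \<in> A" "c \<in> OL" "x = vadd a (vsc c x0)" using x0(3) x by blast
    have av: "a \<in> vecs n" using ac Av by blast
    have "vsc \<rho> x = vadd (vsc \<rho> a) (vsc (\<rho> * c) x0)" using ac(3) by (simp add: vsc_vadd)
    then have "B (vsc \<rho> x) x0 = B (vsc \<rho> a) x0 + \<rho> * c * B x0 x0"
      using av x0v by (simp add: B_add_left B_vsc_left)
    also have "\<dots> = - B x0 (vsc \<rho> a)" using B_self[OF x0v] B_antisym[OF vecs_vsc[OF av] x0v] by simp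
    also have "\<dots> = - B (vsc \<rho> x0) a" using av x0v by (simp add: B_vsc_left B_vsc_right)
    finally show ?thesis using inA[OF x0(1)] ac(1) by (simp add: dual_iff)
  qed
  have "vsc \<rho> x \<in> dual M" if x: "x \<in> M" for x
    using dual_mem_iff_generator[OF AM Av x0(1) x0v x0(3), of "vsc \<rho> x"] inA[OF x] key[OF x] by simp
  then show ?thesis unfolding pscale_def \<rho>_def by blast
qed

lemma olength_pscale_dual_of_length_one:
  assumes A: "lattice n OL A" and M: "lattice n OL M" and C: "lattice n OL C"
    and AM: "A \<subseteq> M" and MC: "M \<subseteq> C" and len: "olength OL A M = 1" and dA: "dual A = pscale s C"
  shows "olength OL (pscale s M) (dual M) = olength OL A C - 2"
proof -
  have sub: "pscale s M \<subseteq> dual M" by (rule pscale_subset_dual_of_length_one[OF A M AM MC len dA])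
  note dM = lattice_dual(1)[OF M] and dA' = lattice_dual(1)[OF A]
  note sA = lattice_pscale[OF A] and sM = lattice_pscale[OF M] and sC = lattice_pscale[OF C]
  have d1: "dual M \<subseteq> dual A" "olength OL (dual M) (dual A) = 1"
    using length_one_dual[OF A M AM len] by simp_all
  have "olength OL A C = olength OL (pscale s A) (pscale s C)" by (rule olength_pscale[symmetric])
  also have "\<dots> = olength OL (pscale s A) (pscale s M) + olength OL (pscale s M) (pscale s C)"
    by (rule olength_add[OF sA sM sC pscale_mono[OF AM] pscale_mono[OF MC]])
  also have "olength OL (pscale s M) (pscale s C) = olength OL (pscale s M) (dual M) + 1"
    using olength_add[OF sM dM dA' sub d1(1)] d1(2) dA by simp
  finally show ?thesis using olength_pscale len by simp
qed

end

section \<open>Chains obtained by inserting indices\<close>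

lemma gap_brackets_overlap:
  fixes a b :: "int \<Rightarrow> int"
  assumes "a i \<in> J" "b i \<in> J" "a i \<le> i" "i \<le> b i" "\<forall>x\<in>J. x \<le> a i \<or> b i \<le> x"
    and "a i' \<in> J" "b i' \<in> J" "a i' \<le> i'" "i' \<le> b i'" "\<forall>x\<in>J. x \<le> a i' \<or> b i' \<le> x"
    and "i < i'" "a i' < b i"
  shows "a i = a i'" "b i = b i'"
proof -
  have "a i' \<le> a i \<or> b i \<le> a i'" "a i \<le> a i' \<or> b i' \<le> a i"
    "b i \<le> a i' \<or> b i' \<le> b i" "b i' \<le> a i \<or> b i \<le> b i'"
    using assms(1,2,5,6,7,10) by blast+
  then show "a i = a i'" "b i = b i'" using assms(3,4,8,9,11,12) by linarith+
qed

lemma chain_from_brackets: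
  fixes N :: "int \<Rightarrow> 'a set" and len :: "'a set \<Rightarrow> 'a set \<Rightarrow> nat" and a b :: "int \<Rightarrow> int"
  assumes JI: "J \<subseteq> I"
    and chain_J: "\<forall>i\<in>J. \<forall>i'\<in>J. i < i' \<longrightarrow> N i \<subseteq> N i' \<and> len (N i) (N i') = nat (i' - i)"
    and brackets: "\<forall>i\<in>I. a i \<in> J \<and> b i \<in> J \<and> a i \<le> i \<and> i \<le> b i \<and> (\<forall>x\<in>J. x \<le> a i \<or> b i \<le> x) \<and>
              N (a i) \<subseteq> N i \<and> N i \<subseteq> N (b i) \<and> len (N (a i)) (N i) = nat (i - a i) \<and>
              len (N i) (N (b i)) = nat (b i - i)"
    and brackets_J: "\<forall>i\<in>J. a i = i \<and> b i = i"
    and same_bracket: "\<forall>i\<in>I. \<forall>i'\<in>I. i < i' \<longrightarrow> i \<notin> J \<longrightarrow> i' \<notin> J \<longrightarrow> a i = a i' \<longrightarrow> b i = b i' \<longrightarrow>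
              N i \<subseteq> N i' \<and> len (N i) (N i') = nat (i' - i)"
    and refl: "\<forall>i\<in>I. len (N i) (N i) = 0"
    and add: "\<forall>x\<in>I. \<forall>y\<in>I. \<forall>z\<in>I. N x \<subseteq> N y \<longrightarrow> N y \<subseteq> N z \<longrightarrow>
              len (N x) (N z) = len (N x) (N y) + len (N y) (N z)"
  shows "\<forall>i\<in>I. \<forall>i'\<in>I. i < i' \<longrightarrow> N i \<subseteq> N i' \<and> len (N i) (N i') = nat (i' - i)"
proof (intro ballI impI)
  fix i i' assume i: "i \<in> I" and i': "i' \<in> I" and ii: "i < i'"
  note bi = brackets[rule_format, OF i] and bi' = brackets[rule_format, OF i']
  show "N i \<subseteq> N i' \<and> len (N i) (N i') = nat (i' - i)"
  proof (cases "b i \<le> a i'")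
    case True
    have biI: "b i \<in> I" and aiI: "a i' \<in> I" using bi bi' JI by auto
    have mid: "N (b i) \<subseteq> N (a i') \<and> len (N (b i)) (N (a i')) = nat (a i' - b i)"
    proof (cases "b i < a i'")
      case True then show ?thesis using chain_J bi bi' by blast
    next
      case False then show ?thesis using refl aiI \<open>b i \<le> a i'\<close> by simp
    qed
    have s1: "N i \<subseteq> N (b i)" and s3: "N (a i') \<subseteq> N i'" using bi bi' by auto
    have s23: "N (b i) \<subseteq> N i'" using mid s3 by blast
    have "len (N i) (N i') = len (N i) (N (b i)) + len (N (b i)) (N i')"
      using add i biI i' s1 s23 by blast
    moreover have "len (N (b i)) (N i') = len (N (b i)) (N (a i')) + len (N (a i')) (N i')"
      using add biI aiI i' mid s3 by blast
    ultimately have "len (N i) (N i') = nat (b i - i) + nat (a i' - b i) + nat (i' - a i')"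
      using bi bi' mid by simp
    also have "\<dots> = nat (i' - i)" using True bi bi' by (simp add: nat_add_distrib[symmetric])
    finally show ?thesis using s1 s23 by blast
  next
    case False
    then have eq: "a i = a i'" "b i = b i'"
      using gap_brackets_overlap[of a i J b i'] bi bi' ii by auto
    have "i \<notin> J" "i' \<notin> J" using brackets_J eq False bi bi' ii by force+
    then show ?thesis using same_bracket i i' ii eq by blast
  qed
qed

section \<open>The fibre of the forgetful map\<close>

lemma invimg_shift_iff: "i + 2 * int n * t \<in> invimg n X \<longleftrightarrow> i \<in> invimg n X"
  unfolding invimg_def by simp

lemma invimg_shift: "i \<in> invimg n X \<Longrightarrow> i + 2 * int n * t \<in> invimg n X"
  by (simp add: invimg_shift_iff)

lemma uminus_in_invimg:
  assumes "symmetric_type n X" "i \<in> invimg n X"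
  shows "- i \<in> invimg n X"
proof -
  have "(- (i mod (2 * int n))) mod (2 * int n) \<in> X"
    using assms unfolding symmetric_type_def invimg_def by blast
  then show ?thesis unfolding invimg_def by (simp add: mod_minus_eq)
qed

lemma mod_eq_iff_shift: "(i::int) mod m = c mod m \<longleftrightarrow> (\<exists>t. i = c + m * t)"
  by (auto simp: mod_eq_dvd_iff dvd_def algebra_simps)

locale chain_fibre = symplectic_space v OL \<pi> n B
  for v :: "'L::field \<Rightarrow> int" and OL :: "'L set" and \<pi> :: 'L and n :: nat
    and B :: "(nat \<Rightarrow> 'L) \<Rightarrow> (nat \<Rightarrow> 'L) \<Rightarrow> 'L" +
  fixes Jbar :: "int set" and k :: int and Mc :: "int \<Rightarrow> (nat \<Rightarrow> 'L) set"
  assumes n_pos: "n \<ge> 1" and Jbar_symmetric: "symmetric_type n Jbar"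
    and k_in_J: "k \<in> invimg n Jbar" and Suc_k_notin_J: "k + 1 \<notin> invimg n Jbar"
    and Mc_in_XG: "Mc \<in> XG n OL \<pi> B Jbar"
begin

abbreviation period :: int where "period \<equiv> 2 * int n"
abbreviation J :: "int set" where "J \<equiv> invimg n Jbar"

lemma period_pos: "period > 0"
  using n_pos by simp

lemma Mc_XG:
  shows Mc_empty: "\<And>i. i \<notin> J \<Longrightarrow> Mc i = {}"
    and Mc_lattice: "\<And>i. i \<in> J \<Longrightarrow> lattice n OL (Mc i)"
    and Mc_chain: "\<And>i i'. i \<in> J \<Longrightarrow> i' \<in> J \<Longrightarrow> i < i' \<Longrightarrow>
      Mc i \<subseteq> Mc i' \<and> olength OL (Mc i) (Mc i') = nat (i' - i)"
    and Mc_period: "\<forall>i\<in>J. Mc (i + period) = vsc (inverse \<pi>) ` Mc i"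
    and Mc_selfdual: "\<exists>d::int. \<forall>i\<in>J. dual (Mc i) = Mc (- i + period * d)"
  using Mc_in_XG unfolding XG_def Let_def by auto

definition d :: int where "d = (SOME d. \<forall>i\<in>J. dual (Mc i) = Mc (- i + period * d))"

definition dual_index :: "int \<Rightarrow> int" where "dual_index i = - i + period * d"

lemma Mc_dual: "i \<in> J \<Longrightarrow> dual (Mc i) = Mc (dual_index i)"
  using someI_ex[OF Mc_selfdual] unfolding d_def dual_index_def by blast

lemma dual_index_in_J: "i \<in> J \<Longrightarrow> dual_index i \<in> J"
  unfolding dual_index_def using uminus_in_invimg[OF Jbar_symmetric] invimg_shift by blast

lemma Mc_pscale: "i \<in> J \<Longrightarrow> Mc (i + period * t) = pscale t (Mc i)"
  using pscale_periodic[of J Mc i t] invimg_shift Mc_period by blast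

lemma Mc_shift_eq_imp:
  assumes i: "i \<in> J" and eq: "Mc (i + period * t) = Mc i"
  shows "t = 0"
proof (rule ccontr)
  assume t: "t \<noteq> 0"
  have i': "i + period * t \<in> J" using invimg_shift[OF i] .
  have "olength OL (Mc i) (Mc i) = 0" using olength_refl[OF lattice_omodule[OF Mc_lattice[OF i]]] .
  moreover have "olength OL (Mc i) (Mc i) \<noteq> 0"
  proof (cases "t > 0")
    case True
    then have "olength OL (Mc i) (Mc (i + period * t)) = nat (period * t)"
      using Mc_chain[OF i i'] period_pos by simp
    then show ?thesis using eq mult_pos_pos[OF period_pos True] by simp
  next
    case False
    then have "period * t < 0" using t period_pos by (simp add: mult_pos_neg)
    then have "olength OL (Mc (i + period * t)) (Mc i) = nat (- (period * t))"
      using Mc_chain[OF i' i] by simp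
    then show ?thesis using eq \<open>period * t < 0\<close> by simp
  qed
  ultimately show False by simp
qed

definition l :: int where "l = (LEAST l. l \<in> J \<and> k < l)"

lemma l_in_J: "l \<in> J" and k_less_l: "k < l" and l_least: "\<And>x. x \<in> J \<Longrightarrow> k < x \<Longrightarrow> l \<le> x"
proof -
  have mem: "k + period * 1 \<in> J" by (rule invimg_shift[OF k_in_J])
  have less: "k < k + period * 1" using period_pos by simp
  from int_Least_greater[OF mem less] show "l \<in> J" "k < l" "\<And>x. x \<in> J \<Longrightarrow> k < x \<Longrightarrow> l \<le> x"
    unfolding l_def by blast+
qed

lemma k_plus_2_le_l: "k + 2 \<le> l"
  using l_in_J Suc_k_notin_J k_less_l by (cases "l = k + 1") auto

lemma J_gap: "x \<in> J \<Longrightarrow> x \<le> k + period * t \<or> l + period * t \<le> x"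
  using l_least[of "x - period * t"] invimg_shift[of x n Jbar "- t"] by force

lemma J_dual_gap: "x \<in> J \<Longrightarrow> x \<le> dual_index l + period * t \<or> dual_index k + period * t \<le> x"
  using J_gap[OF dual_index_in_J[OF invimg_shift[of x n Jbar "- t"]], of 0]
  unfolding dual_index_def by auto

definition k_dual :: int where "k_dual = dual_index (k + 1)"

lemma k_dual_eq: "k_dual = dual_index k - 1"
  unfolding k_dual_def dual_index_def by simp

abbreviation Ibar :: "int set" where "Ibar \<equiv> Jbar \<union> {(k + 1) mod period, (- (k + 1)) mod period}"
abbreviation I :: "int set" where "I \<equiv> invimg n Ibar"

lemma I_iff: "i \<in> I \<longleftrightarrow> i \<in> J \<or> (\<exists>t. i = k + 1 + period * t) \<or> (\<exists>t. i = k_dual + period * t)"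
proof -
  have "(- (k + 1)) mod period = k_dual mod period" unfolding k_dual_def dual_index_def by simp
  then have "i \<in> I \<longleftrightarrow> i \<in> J \<or> i mod period = (k + 1) mod period \<or> i mod period = k_dual mod period"
    unfolding invimg_def by auto
  then show ?thesis by (simp add: mod_eq_iff_shift)
qed

lemma J_subset_I: "J \<subseteq> I"
  unfolding invimg_def by auto

lemma Suc_k_shift_notin_J: "k + 1 + period * t \<notin> J"
  using invimg_shift_iff[of "k + 1" n t Jbar] Suc_k_notin_J by simp

lemma k_dual_shift_notin_J: "k_dual + period * t \<notin> J"
proof
  assume "k_dual + period * t \<in> J"
  then have "- (k + 1) + period * (d + t) \<in> J"
    unfolding k_dual_def dual_index_def by (simp add: algebra_simps)
  then have "- (- (k + 1)) \<in> J" using uminus_in_invimg[OF Jbar_symmetric] invimg_shift_iff by blast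
  then show False using Suc_k_notin_J by (simp add: add.commute)
qed

lemma I_cases:
  assumes "i \<in> I"
  obtains (J) "i \<in> J" | (Suc_k) t where "i = k + 1 + period * t"
    | (k_dual) t where "i = k_dual + period * t" "\<not> (\<exists>t'. i = k + 1 + period * t')"
  using assms I_iff by blast

lemma Mc_k_lattice: "lattice n OL (Mc k)"
  using Mc_lattice[OF k_in_J] .

lemma Mc_l_lattice: "lattice n OL (Mc l)"
  using Mc_lattice[OF l_in_J] .

lemma Mc_k_l: "Mc k \<subseteq> Mc l" "olength OL (Mc k) (Mc l) = nat (l - k)"
  using Mc_chain[OF k_in_J l_in_J k_less_l] by auto

definition admissible :: "(nat \<Rightarrow> 'L) set \<Rightarrow> bool" where
  "admissible M \<longleftrightarrow> lattice n OL M \<and> Mc k \<subseteq> M \<and> M \<subseteq> Mc l \<and> vsc \<pi> ` M \<subseteq> Mc k \<and>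
     olength OL (Mc k) M = 1"

definition in_fibre :: "(int \<Rightarrow> (nat \<Rightarrow> 'L) set) \<Rightarrow> bool" where
  "in_fibre N \<longleftrightarrow> N \<in> XG n OL \<pi> B Ibar \<and> restrict_chain J N = Mc"

lemma in_fibreD:
  assumes "in_fibre N"
  shows "\<And>i. i \<notin> I \<Longrightarrow> N i = {}" "\<And>i. i \<in> I \<Longrightarrow> lattice n OL (N i)"
    "\<And>i i'. i \<in> I \<Longrightarrow> i' \<in> I \<Longrightarrow> i < i' \<Longrightarrow> N i \<subseteq> N i' \<and> olength OL (N i) (N i') = nat (i' - i)"
    "\<forall>i\<in>I. N (i + period) = vsc (inverse \<pi>) ` N i"
    "\<exists>d::int. \<forall>i\<in>I. dual (N i) = N (- i + period * d)"
  using assms unfolding in_fibre_def XG_def Let_def by auto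

lemma in_fibre_on_J:
  assumes "in_fibre N" "i \<in> J"
  shows "N i = Mc i"
proof -
  have "restrict_chain J N i = Mc i" using assms(1) unfolding in_fibre_def by simp
  then show ?thesis using assms(2) by (simp add: restrict_chain_def)
qed

lemma Suc_k_in_I: "k + 1 \<in> I"
  using I_iff[of "k + 1"] by (metis add_0_right mult_zero_right)

lemma k_dual_in_I: "k_dual \<in> I"
  using I_iff[of k_dual] by (metis add_0_right mult_zero_right)

lemma in_fibre_admissible:
  assumes N: "in_fibre N"
  shows "admissible (N (k + 1))"
proof -
  have kI: "k \<in> I" and lI: "l \<in> I" using J_subset_I k_in_J l_in_J by auto
  have Nk: "N k = Mc k" and Nl: "N l = Mc l" using in_fibre_on_J[OF N] k_in_J l_in_J by auto
  have lat: "lattice n OL (N (k + 1))" using in_fibreD(2)[OF N Suc_k_in_I] .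
  have low: "Mc k \<subseteq> N (k + 1)" "olength OL (Mc k) (N (k + 1)) = 1"
    using in_fibreD(3)[OF N kI Suc_k_in_I] Nk by simp_all
  have "N (k + 1) \<subseteq> Mc l"
    using in_fibreD(3)[OF N Suc_k_in_I lI] k_plus_2_le_l Nl by simp
  moreover have "vsc \<pi> ` N (k + 1) \<subseteq> Mc k"
    using length_one_pi_subset[OF Mc_k_lattice lat low] .
  ultimately show ?thesis unfolding admissible_def using lat low by simp
qed

lemma in_fibre_selfdual:
  assumes N: "in_fibre N"
  shows "\<forall>i\<in>I. dual (N i) = N (dual_index i)"
proof -
  obtain d' where d': "\<forall>i\<in>I. dual (N i) = N (- i + period * d')" using in_fibreD(5)[OF N] by blast
  have kI: "k \<in> I" using J_subset_I k_in_J by auto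
  have shifted: "- k + period * d' = dual_index k + period * (d' - d)"
    unfolding dual_index_def by (simp add: algebra_simps)
  have mem: "dual_index k + period * (d' - d) \<in> J" using invimg_shift[OF dual_index_in_J[OF k_in_J]] .
  have "Mc (dual_index k) = dual (N k)" using Mc_dual[OF k_in_J] in_fibre_on_J[OF N k_in_J] by simp
  also have "\<dots> = N (- k + period * d')" using d' kI by blast
  also have "\<dots> = Mc (dual_index k + period * (d' - d))" using shifted in_fibre_on_J[OF N mem] by simp
  finally have "d' - d = 0" using Mc_shift_eq_imp[OF dual_index_in_J[OF k_in_J]] by metis
  then show ?thesis using d' unfolding dual_index_def by simp
qed

lemma in_fibre_pscale:
  assumes "in_fibre N" "i \<in> I"
  shows "N (i + period * t) = pscale t (N i)"
  using pscale_periodic[of I N i t] invimg_shift in_fibreD(4)[OF assms(1)] assms(2) by blast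

lemma in_fibre_eq_if_eq_at_Suc_k:
  assumes N: "in_fibre N" and N': "in_fibre N'" and eq: "N (k + 1) = N' (k + 1)"
  shows "N = N'"
proof
  fix i
  have at_k_dual: "N k_dual = N' k_dual"
    using in_fibre_selfdual[OF N] in_fibre_selfdual[OF N'] Suc_k_in_I eq
    unfolding k_dual_def by metis
  show "N i = N' i"
  proof (cases "i \<in> I")
    case False
    then show ?thesis using in_fibreD(1)[OF N] in_fibreD(1)[OF N'] by simp
  next
    case True
    then show ?thesis
    proof (cases rule: I_cases)
      case J then show ?thesis using in_fibre_on_J[OF N] in_fibre_on_J[OF N'] by simp
    next
      case Suc_k then show ?thesis
        using in_fibre_pscale[OF N Suc_k_in_I] in_fibre_pscale[OF N' Suc_k_in_I] eq by simp
    next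
      case k_dual then show ?thesis
        using in_fibre_pscale[OF N k_dual_in_I] in_fibre_pscale[OF N' k_dual_in_I] at_k_dual by simp
    qed
  qed
qed

lemma admissibleD:
  assumes "admissible M"
  shows "lattice n OL M" "Mc k \<subseteq> M" "M \<subseteq> Mc l" "olength OL (Mc k) M = 1"
  using assms unfolding admissible_def by auto

lemma admissible_olength_upper:
  assumes "admissible M"
  shows "olength OL M (Mc l) = nat (l - k) - 1"
  using olength_add[OF Mc_k_lattice admissibleD(1)[OF assms] Mc_l_lattice admissibleD(2,3)[OF assms]]
    Mc_k_l(2) admissibleD(4)[OF assms] by simp

lemma admissible_dual:
  assumes M: "admissible M"
  shows "dual (Mc l) \<subseteq> dual M" "dual M \<subseteq> dual (Mc k)" "olength OL (dual M) (dual (Mc k)) = 1"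
    "olength OL (dual (Mc l)) (dual M) = nat (l - k) - 1"
proof -
  note M' = admissibleD[OF M]
  show upper: "dual (Mc l) \<subseteq> dual M" using M'(3) by (rule dual_antimono)
  show lower: "dual M \<subseteq> dual (Mc k)" and len: "olength OL (dual M) (dual (Mc k)) = 1"
    using length_one_dual[OF Mc_k_lattice M'(1,2,4)] by auto
  have "dual_index l < dual_index k" using k_less_l unfolding dual_index_def by simp
  then have "olength OL (dual (Mc l)) (dual (Mc k)) = nat (l - k)"
    using Mc_chain[OF dual_index_in_J[OF l_in_J] dual_index_in_J[OF k_in_J]]
      Mc_dual[OF k_in_J] Mc_dual[OF l_in_J] unfolding dual_index_def by simp
  then show "olength OL (dual (Mc l)) (dual M) = nat (l - k) - 1"
    using olength_add[OF lattice_dual(1)[OF Mc_l_lattice] lattice_dual(1)[OF M'(1)]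
      lattice_dual(1)[OF Mc_k_lattice] upper lower] len by simp
qed

lemma admissible_pscale_dual:
  assumes M: "admissible M" and s: "dual_index k = l + period * s"
  shows "pscale s M \<subseteq> dual M" "olength OL (pscale s M) (dual M) = nat (l - k) - 2"
proof -
  note M' = admissibleD[OF M]
  have "dual (Mc k) = pscale s (Mc l)" using Mc_dual[OF k_in_J] s Mc_pscale[OF l_in_J] by simp
  then show "pscale s M \<subseteq> dual M" "olength OL (pscale s M) (dual M) = nat (l - k) - 2"
    using pscale_subset_dual_of_length_one[OF Mc_k_lattice M'(1,2,3,4)]
      olength_pscale_dual_of_length_one[OF Mc_k_lattice M'(1) Mc_l_lattice M'(2,3,4)] Mc_k_l(2)
    by simp_all
qed

lemma admissible_dual_eq_pscale:
  assumes M: "admissible M" and t0: "k_dual = k + 1 + period * t0"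
  shows "dual M = pscale t0 M"
proof -
  have dk: "dual_index k = (k + 2) + period * t0" using k_dual_eq t0 by simp
  then have "(k + 2) + period * t0 \<in> J" using dual_index_in_J[OF k_in_J] by simp
  then have "l \<le> k + 2" using l_least invimg_shift_iff by simp
  then have l: "l = k + 2" using k_plus_2_le_l by simp
  note sd = admissible_pscale_dual[OF M dk[folded l]]
  have "pscale t0 M = dual M"
    using olength_eq_0_imp_eq[OF lattice_pscale[OF admissibleD(1)[OF M]]
      lattice_dual(1)[OF admissibleD(1)[OF M]] sd(1)] sd(2) l by simp
  then show ?thesis by simp
qed

text \<open>If k + 1 and k_dual are congruent modulo 2n, the clause for dual M is never reached;
  by admissible_dual_eq_pscale nothing is lost.\<close>

definition chain_of :: "(nat \<Rightarrow> 'L) set \<Rightarrow> int \<Rightarrow> (nat \<Rightarrow> 'L) set" where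
  "chain_of M i = (if i \<in> J then Mc i
     else if (\<exists>t. i = k + 1 + period * t) then pscale ((i - (k + 1)) div period) M
     else if (\<exists>t. i = k_dual + period * t) then pscale ((i - k_dual) div period) (dual M) else {})"

lemma chain_of_J: "i \<in> J \<Longrightarrow> chain_of M i = Mc i"
  unfolding chain_of_def by simp

lemma chain_of_Suc_k: "chain_of M (k + 1 + period * t) = pscale t M"
  using Suc_k_shift_notin_J period_pos unfolding chain_of_def by auto

lemma chain_of_k_dual:
  assumes "\<not> (\<exists>t'. k_dual + period * t = k + 1 + period * t')"
  shows "chain_of M (k_dual + period * t) = pscale t (dual M)"
  using assms k_dual_shift_notin_J period_pos unfolding chain_of_def by auto

lemma chain_of_notin_I: "i \<notin> I \<Longrightarrow> chain_of M i = {}"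
  unfolding chain_of_def using I_iff by auto

lemma chain_of_lattice:
  assumes "admissible M" "i \<in> I"
  shows "lattice n OL (chain_of M i)"
  using assms(2)
proof (cases rule: I_cases)
  case J then show ?thesis using Mc_lattice chain_of_J by simp
next
  case (Suc_k t) then show ?thesis using chain_of_Suc_k lattice_pscale admissibleD(1)[OF assms(1)] by simp
next
  case (k_dual t) then show ?thesis
    using chain_of_k_dual lattice_pscale lattice_dual(1)[OF admissibleD(1)[OF assms(1)]] by simp
qed

lemma chain_of_period:
  assumes "i \<in> I"
  shows "chain_of M (i + period) = vsc (inverse \<pi>) ` chain_of M i"
  using assms
proof (cases rule: I_cases)
  case J
  then have "i + period * 1 \<in> J" by (rule invimg_shift)
  then show ?thesis using J Mc_period chain_of_J by simp
next
  case (Suc_k t)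
  then have shift: "i + period = k + 1 + period * (t + 1)" by (simp add: algebra_simps)
  have "chain_of M (i + period) = pscale (t + 1) M" unfolding shift by (rule chain_of_Suc_k)
  also have "\<dots> = vsc (inverse \<pi>) ` chain_of M i"
    using Suc_k chain_of_Suc_k image_vsc_inverse_pi_pscale by simp
  finally show ?thesis .
next
  case (k_dual t)
  have shift: "i + period = k_dual + period * (t + 1)" using k_dual by (simp add: algebra_simps)
  have "\<not> (\<exists>t'. k_dual + period * (t + 1) = k + 1 + period * t')"
  proof
    assume "\<exists>t'. k_dual + period * (t + 1) = k + 1 + period * t'"
    then obtain t' where "k_dual + period * (t + 1) = k + 1 + period * t'" by blast
    then have "i = k + 1 + period * (t' - 1)" using k_dual by (simp add: algebra_simps)
    then show False using k_dual by blast
  qed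
  then have "chain_of M (i + period) = pscale (t + 1) (dual M)" unfolding shift by (rule chain_of_k_dual)
  also have "\<dots> = vsc (inverse \<pi>) ` chain_of M i"
    using k_dual chain_of_k_dual image_vsc_inverse_pi_pscale by simp
  finally show ?thesis .
qed

lemma chain_of_selfdual:
  assumes M: "admissible M" and i: "i \<in> I"
  shows "dual (chain_of M i) = chain_of M (dual_index i)"
  using i
proof (cases rule: I_cases)
  case J then show ?thesis using Mc_dual dual_index_in_J chain_of_J by simp
next
  case (Suc_k t)
  note Mv = lattice_vecs[OF admissibleD(1)[OF M]]
  have lhs: "dual (chain_of M i) = pscale (- t) (dual M)" using Suc_k chain_of_Suc_k dual_pscale[OF Mv] by simp
  have di: "dual_index i = k_dual + period * (- t)"
    using Suc_k unfolding k_dual_def dual_index_def by (simp add: algebra_simps)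
  show ?thesis
  proof (cases "\<exists>t0. k_dual = k + 1 + period * t0")
    case True
    then obtain t0 where t0: "k_dual = k + 1 + period * t0" by blast
    have "dual_index i = k + 1 + period * (t0 - t)" using di t0 by (simp add: algebra_simps)
    then show ?thesis
      using lhs chain_of_Suc_k admissible_dual_eq_pscale[OF M t0] by (simp add: pscale_pscale)
  next
    case False
    have "\<not> (\<exists>t'. k_dual + period * (- t) = k + 1 + period * t')"
    proof
      assume "\<exists>t'. k_dual + period * (- t) = k + 1 + period * t'"
      then obtain t' where "k_dual + period * (- t) = k + 1 + period * t'" by blast
      then have "k_dual = k + 1 + period * (t' + t)" by (simp add: algebra_simps)
      then show False using False by blast
    qed
    then show ?thesis unfolding lhs di by (rule chain_of_k_dual[symmetric])
  qed
next
  case (k_dual t)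
  note Ml = admissibleD(1)[OF M]
  have lhs: "dual (chain_of M i) = pscale (- t) M"
    using k_dual chain_of_k_dual dual_pscale[OF lattice_vecs[OF lattice_dual(1)[OF Ml]]] dual_dual[OF Ml]
    by simp
  have di: "dual_index i = k + 1 + period * (- t)"
    using k_dual unfolding k_dual_def dual_index_def by (simp add: algebra_simps)
  show ?thesis unfolding lhs di by (rule chain_of_Suc_k[symmetric])
qed

definition bracket_lower :: "int \<Rightarrow> int" where
  "bracket_lower i = (if i \<in> J then i else if (\<exists>t. i = k + 1 + period * t) then i - 1 else i - (l - k - 1))"

definition bracket_upper :: "int \<Rightarrow> int" where
  "bracket_upper i = (if i \<in> J then i else if (\<exists>t. i = k + 1 + period * t) then i + (l - k - 1) else i + 1)"

lemma chain_of_around_Suc_k: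
  assumes M: "admissible M"
  shows "chain_of M (k + period * t) \<subseteq> chain_of M (k + 1 + period * t)"
    "chain_of M (k + 1 + period * t) \<subseteq> chain_of M (l + period * t)"
    "olength OL (chain_of M (k + period * t)) (chain_of M (k + 1 + period * t)) = 1"
    "olength OL (chain_of M (k + 1 + period * t)) (chain_of M (l + period * t)) = nat (l - k) - 1"
proof -
  note M' = admissibleD[OF M]
  have lower: "chain_of M (k + period * t) = pscale t (Mc k)"
    using chain_of_J[OF invimg_shift[OF k_in_J]] Mc_pscale[OF k_in_J] by simp
  have upper: "chain_of M (l + period * t) = pscale t (Mc l)"
    using chain_of_J[OF invimg_shift[OF l_in_J]] Mc_pscale[OF l_in_J] by simp
  show "chain_of M (k + period * t) \<subseteq> chain_of M (k + 1 + period * t)"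
    "chain_of M (k + 1 + period * t) \<subseteq> chain_of M (l + period * t)"
    "olength OL (chain_of M (k + period * t)) (chain_of M (k + 1 + period * t)) = 1"
    "olength OL (chain_of M (k + 1 + period * t)) (chain_of M (l + period * t)) = nat (l - k) - 1"
    unfolding lower upper chain_of_Suc_k olength_pscale
    using pscale_mono[OF M'(2)] pscale_mono[OF M'(3)] M'(4) admissible_olength_upper[OF M] by simp_all
qed

lemma chain_of_around_k_dual:
  assumes M: "admissible M" and i: "\<not> (\<exists>t'. k_dual + period * t = k + 1 + period * t')"
  shows "chain_of M (dual_index l + period * t) \<subseteq> chain_of M (k_dual + period * t)"
    "chain_of M (k_dual + period * t) \<subseteq> chain_of M (dual_index k + period * t)"
    "olength OL (chain_of M (dual_index l + period * t)) (chain_of M (k_dual + period * t)) = nat (l - k) - 1"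
    "olength OL (chain_of M (k_dual + period * t)) (chain_of M (dual_index k + period * t)) = 1"
proof -
  note D = admissible_dual[OF M]
  have lower: "chain_of M (dual_index l + period * t) = pscale t (dual (Mc l))"
    using chain_of_J[OF invimg_shift[OF dual_index_in_J[OF l_in_J]]]
      Mc_pscale[OF dual_index_in_J[OF l_in_J]] Mc_dual[OF l_in_J] by simp
  have upper: "chain_of M (dual_index k + period * t) = pscale t (dual (Mc k))"
    using chain_of_J[OF invimg_shift[OF dual_index_in_J[OF k_in_J]]]
      Mc_pscale[OF dual_index_in_J[OF k_in_J]] Mc_dual[OF k_in_J] by simp
  show "chain_of M (dual_index l + period * t) \<subseteq> chain_of M (k_dual + period * t)"
    "chain_of M (k_dual + period * t) \<subseteq> chain_of M (dual_index k + period * t)"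
    "olength OL (chain_of M (dual_index l + period * t)) (chain_of M (k_dual + period * t)) = nat (l - k) - 1"
    "olength OL (chain_of M (k_dual + period * t)) (chain_of M (dual_index k + period * t)) = 1"
    unfolding lower upper chain_of_k_dual[OF i] olength_pscale
    using pscale_mono[OF D(1)] pscale_mono[OF D(2)] D(3,4) by simp_all
qed

lemma chain_of_brackets:
  assumes M: "admissible M" and i: "i \<in> I"
  shows "bracket_lower i \<in> J \<and> bracket_upper i \<in> J \<and> bracket_lower i \<le> i \<and> i \<le> bracket_upper i \<and>
    (\<forall>x\<in>J. x \<le> bracket_lower i \<or> bracket_upper i \<le> x) \<and>
    chain_of M (bracket_lower i) \<subseteq> chain_of M i \<and> chain_of M i \<subseteq> chain_of M (bracket_upper i) \<and>
    olength OL (chain_of M (bracket_lower i)) (chain_of M i) = nat (i - bracket_lower i) \<and>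
    olength OL (chain_of M i) (chain_of M (bracket_upper i)) = nat (bracket_upper i - i)"
  using i
proof (cases rule: I_cases)
  case J
  then have "olength OL (chain_of M i) (chain_of M i) = 0"
    using olength_refl[OF lattice_omodule[OF Mc_lattice[OF J]]] chain_of_J by simp
  then show ?thesis using J unfolding bracket_lower_def bracket_upper_def by auto
next
  case (Suc_k t)
  have "bracket_lower i = k + period * t" "bracket_upper i = l + period * t"
    using Suc_k Suc_k_shift_notin_J unfolding bracket_lower_def bracket_upper_def by auto
  then show ?thesis
    using Suc_k chain_of_around_Suc_k[OF M] invimg_shift[OF k_in_J] invimg_shift[OF l_in_J]
      J_gap k_plus_2_le_l by auto
next
  case (k_dual t)
  define lo where "lo = dual_index l + period * t"
  define up where "up = dual_index k + period * t"
  have not_Suc_k: "\<not> (\<exists>t'. k_dual + period * t = k + 1 + period * t')" using k_dual by blast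
  have "bracket_lower i = lo" "bracket_upper i = up"
    using k_dual k_dual_shift_notin_J unfolding bracket_lower_def bracket_upper_def lo_def up_def
    by (auto simp: k_dual_eq dual_index_def)
  moreover have "lo \<in> J" "up \<in> J"
    unfolding lo_def up_def using invimg_shift dual_index_in_J k_in_J l_in_J by blast+
  moreover have "\<forall>x\<in>J. x \<le> lo \<or> up \<le> x" unfolding lo_def up_def using J_dual_gap by blast
  moreover have "i - lo = (l - k) - 1" "up - i = 1"
    using k_dual unfolding lo_def up_def k_dual_eq dual_index_def by simp_all
  ultimately show ?thesis
    using chain_of_around_k_dual[OF M not_Suc_k, folded lo_def up_def] k_plus_2_le_l
    unfolding k_dual(1) by (auto simp: nat_diff_distrib)
qed

lemma bracket_lower_Suc_k: "i = k + 1 + period * t \<Longrightarrow> bracket_lower i = i - 1"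
  using Suc_k_shift_notin_J unfolding bracket_lower_def by auto

lemma bracket_lower_k_dual:
  "i = k_dual + period * t \<Longrightarrow> \<not> (\<exists>t'. i = k + 1 + period * t') \<Longrightarrow> bracket_lower i = i - (l - k - 1)"
  using k_dual_shift_notin_J unfolding bracket_lower_def by auto

text \<open>Two new indices with the same bracket are i = k + 1 + 2nt and i' = k_dual + 2nt' with
  i' - i = l - k - 2; this is where admissible_pscale_dual is needed.\<close>

lemma chain_of_same_bracket:
  assumes M: "admissible M" and i: "i \<in> I" "i \<notin> J" and i': "i' \<in> I" "i' \<notin> J"
    and less: "i < i'" and same: "bracket_lower i = bracket_lower i'"
  shows "chain_of M i \<subseteq> chain_of M i' \<and> olength OL (chain_of M i) (chain_of M i') = nat (i' - i)"
  using i(1)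
proof (cases rule: I_cases)
  case (Suc_k t)
  note i_Suc_k = Suc_k
  show ?thesis using i'(1)
  proof (cases rule: I_cases)
    case (k_dual t')
    have diff: "i' = i + (l - k - 2)"
      using same bracket_lower_Suc_k[OF i_Suc_k] bracket_lower_k_dual[OF k_dual] by simp
    have "dual_index k = l + period * (t - t')"
      using diff i_Suc_k k_dual(1) k_dual_eq by (simp add: algebra_simps)
    note pd = admissible_pscale_dual[OF M this]
    have "chain_of M i = pscale t' (pscale (t - t') M)" using i_Suc_k chain_of_Suc_k pscale_pscale by simp
    moreover have "chain_of M i' = pscale t' (dual M)" using k_dual chain_of_k_dual by simp
    ultimately show ?thesis
      using pscale_mono[OF pd(1)] olength_pscale pd(2) diff k_plus_2_le_l by simp
  next
    case (Suc_k t')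
    then show ?thesis using bracket_lower_Suc_k[OF i_Suc_k] bracket_lower_Suc_k[OF Suc_k] same less by simp
  qed (use i' in simp)
next
  case (k_dual t)
  note i_k_dual = k_dual
  show ?thesis using i'(1)
  proof (cases rule: I_cases)
    case (Suc_k t')
    then show ?thesis
      using less same k_plus_2_le_l bracket_lower_Suc_k[OF Suc_k] bracket_lower_k_dual[OF i_k_dual]
      by simp
  next
    case (k_dual t')
    then show ?thesis
      using less same bracket_lower_k_dual[OF i_k_dual] bracket_lower_k_dual[OF k_dual] by simp
  qed (use i' in simp)
qed (use i in simp)

lemma chain_of_chain:
  assumes M: "admissible M"
  shows "\<forall>i\<in>I. \<forall>i'\<in>I. i < i' \<longrightarrow>
    chain_of M i \<subseteq> chain_of M i' \<and> olength OL (chain_of M i) (chain_of M i') = nat (i' - i)"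
proof (rule chain_from_brackets[OF J_subset_I])
  show "\<forall>i\<in>J. \<forall>i'\<in>J. i < i' \<longrightarrow>
      chain_of M i \<subseteq> chain_of M i' \<and> olength OL (chain_of M i) (chain_of M i') = nat (i' - i)"
    using Mc_chain chain_of_J by simp
  show "\<forall>i\<in>I. bracket_lower i \<in> J \<and> bracket_upper i \<in> J \<and> bracket_lower i \<le> i \<and>
      i \<le> bracket_upper i \<and> (\<forall>x\<in>J. x \<le> bracket_lower i \<or> bracket_upper i \<le> x) \<and>
      chain_of M (bracket_lower i) \<subseteq> chain_of M i \<and> chain_of M i \<subseteq> chain_of M (bracket_upper i) \<and>
      olength OL (chain_of M (bracket_lower i)) (chain_of M i) = nat (i - bracket_lower i) \<and>
      olength OL (chain_of M i) (chain_of M (bracket_upper i)) = nat (bracket_upper i - i)"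
    using chain_of_brackets[OF M] by blast
  show "\<forall>i\<in>J. bracket_lower i = i \<and> bracket_upper i = i"
    unfolding bracket_lower_def bracket_upper_def by simp
  show "\<forall>i\<in>I. \<forall>i'\<in>I. i < i' \<longrightarrow> i \<notin> J \<longrightarrow> i' \<notin> J \<longrightarrow> bracket_lower i = bracket_lower i' \<longrightarrow>
      bracket_upper i = bracket_upper i' \<longrightarrow>
      chain_of M i \<subseteq> chain_of M i' \<and> olength OL (chain_of M i) (chain_of M i') = nat (i' - i)"
    using chain_of_same_bracket[OF M] by blast
  show "\<forall>i\<in>I. olength OL (chain_of M i) (chain_of M i) = 0"
    using olength_refl lattice_omodule chain_of_lattice[OF M] by blast
  show "\<forall>x\<in>I. \<forall>y\<in>I. \<forall>z\<in>I. chain_of M x \<subseteq> chain_of M y \<longrightarrow> chain_of M y \<subseteq> chain_of M z \<longrightarrow>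
      olength OL (chain_of M x) (chain_of M z) =
      olength OL (chain_of M x) (chain_of M y) + olength OL (chain_of M y) (chain_of M z)"
    using olength_add chain_of_lattice[OF M] by blast
qed

lemma chain_of_in_fibre:
  assumes M: "admissible M"
  shows "in_fibre (chain_of M)"
proof -
  have "chain_of M \<in> XG n OL \<pi> B Ibar"
    unfolding XG_def Let_def mem_Collect_eq
  proof (intro conjI)
    show "\<forall>i. i \<notin> I \<longrightarrow> chain_of M i = {}" using chain_of_notin_I by blast
    show "\<forall>i\<in>I. lattice n OL (chain_of M i)" using chain_of_lattice[OF M] by blast
    show "\<forall>i\<in>I. \<forall>i'\<in>I. i < i' \<longrightarrow>
        chain_of M i \<subseteq> chain_of M i' \<and> olength OL (chain_of M i) (chain_of M i') = nat (i' - i)"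
      by (rule chain_of_chain[OF M])
    show "\<forall>i\<in>I. chain_of M (i + period) = vsc (inverse \<pi>) ` chain_of M i"
      using chain_of_period by blast
    show "\<exists>d. \<forall>i\<in>I. dual (chain_of M i) = chain_of M (- i + period * d)"
      using chain_of_selfdual[OF M] unfolding dual_index_def by blast
  qed
  moreover have "restrict_chain J (chain_of M) = Mc"
    unfolding restrict_chain_def by (rule ext) (simp add: chain_of_J Mc_empty)
  ultimately show ?thesis unfolding in_fibre_def by blast
qed

lemma chain_of_at_Suc_k: "chain_of M (k + 1) = M"
  using chain_of_Suc_k[of M 0] by simp

lemma bij_betw_fibre_admissible:
  "bij_betw (\<lambda>N. N (k + 1)) {N. in_fibre N} {M. admissible M}"
proof (rule bij_betw_imageI)
  show "inj_on (\<lambda>N. N (k + 1)) {N. in_fibre N}"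
    using in_fibre_eq_if_eq_at_Suc_k by (auto intro: inj_onI)
  show "(\<lambda>N. N (k + 1)) ` {N. in_fibre N} = {M. admissible M}"
  proof
    show "(\<lambda>N. N (k + 1)) ` {N. in_fibre N} \<subseteq> {M. admissible M}"
      using in_fibre_admissible by auto
    show "{M. admissible M} \<subseteq> (\<lambda>N. N (k + 1)) ` {N. in_fibre N}"
      using chain_of_in_fibre chain_of_at_Suc_k by (metis (mono_tags, lifting) image_eqI mem_Collect_eq subsetI)
  qed
qed

end

theorem lemma2p3:
  fixes v :: "'L::field \<Rightarrow> int" and OL :: "'L set" and \<pi> :: 'L
    and n :: nat and B :: "(nat \<Rightarrow> 'L) \<Rightarrow> (nat \<Rightarrow> 'L) \<Rightarrow> 'L"
    and Jbar :: "int set" and k :: int and Mc :: "int \<Rightarrow> (nat \<Rightarrow> 'L) set"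
  assumes "discrete_valued v OL \<pi>"
    and "n \<ge> 1"
    and "symplectic n B"
    and "Jbar \<noteq> {}" and "symmetric_type n Jbar"
    and "k \<in> invimg n Jbar" and "k + 1 \<notin> invimg n Jbar"
    and "Mc \<in> XG n OL \<pi> B Jbar"
  shows "let J = invimg n Jbar;
             Ibar = Jbar \<union> {(k + 1) mod (2 * int n), (- (k + 1)) mod (2 * int n)};
             l = (LEAST l. l \<in> J \<and> k < l)
         in bij_betw (\<lambda>M. M (k + 1))
              {M \<in> XG n OL \<pi> B Ibar. restrict_chain J M = Mc}
              {M. lattice n OL M \<and> Mc k \<subseteq> M \<and> M \<subseteq> Mc l \<and>
                  vsc \<pi> ` M \<subseteq> Mc k \<and> olength OL (Mc k) M = 1}"
proof -
  interpret chain_fibre v OL \<pi> n B Jbar k Mc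
    using assms by unfold_locales auto
  have "{M \<in> XG n OL \<pi> B Ibar. restrict_chain J M = Mc} = {N. in_fibre N}"
    unfolding in_fibre_def by blast
  moreover have "{M. lattice n OL M \<and> Mc k \<subseteq> M \<and> M \<subseteq> Mc l \<and> vsc \<pi> ` M \<subseteq> Mc k \<and>
      olength OL (Mc k) M = 1} = {M. admissible M}"
    unfolding admissible_def by blast
  ultimately show ?thesis
    unfolding Let_def l_def[symmetric] using bij_betw_fibre_admissible by simp
qed

end
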